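(* Let $D$ be a finite set and $P:D^2\to\{0,1\}$ a binary predicate such that for any two-element subsets $B,C\subseteq D$, the restriction $P|_{B\times C}$ is not a singleton. Then for every $0<\varepsilon<1$ and every instance $I$ of $\mathrm{CSP}(P)$ on $n$ variables there is an $\varepsilon$-sparsifier of $I$ with $O(\varepsilon^{-2}n)$ constraints, where the implied constant does not depend on $I$, $n$ or $\varepsilon$.
   Context: A binary CSP instance is $I=(V,D,\Pi,w)$ where $V$ is a finite set of $n=|V|$ variables, $D$ a finite domain, $\Pi$ a set of constraints, each a pair $\langle (u,v),P\rangle$ with $u,v\in V$ distinct and $P:D^2\to\{0,1\}$, and $w:\Pi\to\mathbb{R}_{>0}$ positive weights. $\mathrm{CSP}(P)$ is the class of instances in which every constraint uses the predicate $P$. For an assignment $A:V\to D$, $\mathrm{Val}_I(A)=\sum_{\pi=\langle(u,v),P\rangle\in\Pi} w(\pi)P(A(u),A(v))$. For $0<\varepsilon<1$, an $\varepsilon$-sparsifier of $I$ is an instance $I_\varepsilon=(V,D,\Pi_\varepsilon,w_\varepsilon)$ with $\Pi_\varepsilon\subseteq\Pi$ and $w_\varepsilon:\Pi_\varepsilon\to\mathbb{R}_{>0}$ such that for every $A:V\to D$, $(1-\varepsilon)\mathrm{Val}_I(A)\le \mathrm{Val}_{I_\varepsilon}(A)\le(1+\varepsilon)\mathrm{Val}_I(A)$; its number of constraints is $|\Pi_\varepsilon|$. A predicate is a singleton if exactly one tuple is mapped to $1$. $P|_{B\times C}$ denotes the restriction of $P$ to $B\times C$. *)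

theory Defs
  imports Main "HOL.Real"
begin

text \<open>A binary CSP(P) instance: variable set V, a set of constraints Pi, each constraint
  being an ordered pair (u,v) of distinct variables (all using the predicate P),
  and positive weights w.\<close>

definition csp_instance :: "'v set \<Rightarrow> ('v \<times> 'v) set \<Rightarrow> (('v \<times> 'v) \<Rightarrow> real) \<Rightarrow> bool" where
  "csp_instance V Pi w \<longleftrightarrow> finite V \<and> Pi \<subseteq> V \<times> V \<and>
     (\<forall>(u,v)\<in>Pi. u \<noteq> v) \<and> (\<forall>c\<in>Pi. w c > 0)"

definition csp_val :: "('d \<Rightarrow> 'd \<Rightarrow> bool) \<Rightarrow> ('v \<times> 'v) set \<Rightarrow> (('v \<times> 'v) \<Rightarrow> real)
    \<Rightarrow> ('v \<Rightarrow> 'd) \<Rightarrow> real" where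
  "csp_val P Pi w A = (\<Sum>c\<in>Pi. w c * (if P (A (fst c)) (A (snd c)) then 1 else 0))"

definition is_sparsifier :: "('d \<Rightarrow> 'd \<Rightarrow> bool) \<Rightarrow> 'd set \<Rightarrow> 'v set \<Rightarrow> ('v \<times> 'v) set
    \<Rightarrow> (('v \<times> 'v) \<Rightarrow> real) \<Rightarrow> real \<Rightarrow> ('v \<times> 'v) set \<Rightarrow> (('v \<times> 'v) \<Rightarrow> real) \<Rightarrow> bool" where
  "is_sparsifier P D V Pi w \<epsilon> Pie we \<longleftrightarrow> Pie \<subseteq> Pi \<and> (\<forall>c\<in>Pie. we c > 0) \<and>
     (\<forall>A. (\<forall>x\<in>V. A x \<in> D) \<longrightarrow>
        (1 - \<epsilon>) * csp_val P Pi w A \<le> csp_val P Pie we A \<and>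
        csp_val P Pie we A \<le> (1 + \<epsilon>) * csp_val P Pi w A)"

definition restriction_singleton :: "('d \<Rightarrow> 'd \<Rightarrow> bool) \<Rightarrow> 'd set \<Rightarrow> 'd set \<Rightarrow> bool" where
  "restriction_singleton P B C \<longleftrightarrow> card {(b,c) \<in> B \<times> C. P b c} = 1"

end

(*
  Call Z(a) = {b. \<not> P a b} the zero set of row a. If two distinct nonempty zero sets
  Z(a1), Z(a2) shared a point b, a point c of one outside the other would make P on
  {a1, a2} x {b, c} a singleton; so the nonempty zero sets form a disjoint family F. This yields the identity
    2 [P a b] = [Z(a) = {}] + [b \<notin> \<Union>F] + #{X \<in> F. [Z(a) = X] \<noteq> [b \<in> X]},
  i.e. 2 [P a b] = sum_k (f_k a - g_k b)^2 for finitely many 0/1-valued features f_k, g_k.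
  Hence, for every assignment A, the value of an instance is a nonnegative combination of the
  quadratic forms sum_c w_c (x (u, left) - x (v, right))^2 of one weighted graph on the
  bipartite double cover V x {left, right}, evaluated at x = (f_k o A, g_k o A). A spectral
  sparsifier of that graph with O(eps^-2 n) edges (Batson, Spielman and Srivastava) is
  therefore an eps-sparsifier of the instance. The BSS construction is carried out for an
  arbitrary finite family of vectors: an upper and a lower barrier potential, both measured
  relative to the Gram matrix, are kept bounded while rank-one terms are added one at a time.
*)

theory Submission
  imports Defs "Jordan_Normal_Form.Determinant"
begin

section \<open>Linear algebra in dimension \<open>n\<close>\<close>

text \<open>Vectors of dimension \<open>n\<close> are functions \<open>nat \<Rightarrow> real\<close> and \<open>n \<times> n\<close> matrices are
  functions \<open>nat \<Rightarrow> nat \<Rightarrow> real\<close>; only the values at indices below \<open>n\<close> matter.\<close>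

definition vdot :: "nat \<Rightarrow> (nat \<Rightarrow> real) \<Rightarrow> (nat \<Rightarrow> real) \<Rightarrow> real" where
  "vdot n x y = (\<Sum>i<n. x i * y i)"

definition mvmult :: "nat \<Rightarrow> (nat \<Rightarrow> nat \<Rightarrow> real) \<Rightarrow> (nat \<Rightarrow> real) \<Rightarrow> nat \<Rightarrow> real" where
  "mvmult n M x = (\<lambda>i. \<Sum>j<n. M i j * x j)"

definition qform :: "nat \<Rightarrow> (nat \<Rightarrow> nat \<Rightarrow> real) \<Rightarrow> (nat \<Rightarrow> real) \<Rightarrow> real" where
  "qform n M x = vdot n x (mvmult n M x)"

definition mat_sym :: "nat \<Rightarrow> (nat \<Rightarrow> nat \<Rightarrow> real) \<Rightarrow> bool" where
  "mat_sym n M \<longleftrightarrow> (\<forall>i<n. \<forall>j<n. M i j = M j i)"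

definition pos_def :: "nat \<Rightarrow> (nat \<Rightarrow> nat \<Rightarrow> real) \<Rightarrow> bool" where
  "pos_def n M \<longleftrightarrow> mat_sym n M \<and> (\<forall>x. (\<exists>i<n. x i \<noteq> 0) \<longrightarrow> qform n M x > 0)"

definition sym_inverse :: "nat \<Rightarrow> (nat \<Rightarrow> nat \<Rightarrow> real) \<Rightarrow> (nat \<Rightarrow> nat \<Rightarrow> real) \<Rightarrow> bool" where
  "sym_inverse n M Y \<longleftrightarrow> mat_sym n Y \<and>
     (\<forall>v. \<forall>i<n. mvmult n M (mvmult n Y v) i = v i) \<and> (\<forall>v. \<forall>i<n. mvmult n Y (mvmult n M v) i = v i)"

definition mat_inv :: "nat \<Rightarrow> (nat \<Rightarrow> nat \<Rightarrow> real) \<Rightarrow> nat \<Rightarrow> nat \<Rightarrow> real" where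
  "mat_inv n M = (SOME Y. sym_inverse n M Y)" \<comment> \<open>arbitrary unless \<open>M\<close> is invertible\<close>

definition std_basis :: "nat \<Rightarrow> nat \<Rightarrow> real" where
  "std_basis i = (\<lambda>k. if k = i then 1 else 0)"

lemma vdot_commute: "vdot n x y = vdot n y x"
  unfolding vdot_def by (simp add: mult.commute)

lemma vdot_cong:
  "(\<And>i. i < n \<Longrightarrow> x i = x' i) \<Longrightarrow> (\<And>i. i < n \<Longrightarrow> y i = y' i) \<Longrightarrow> vdot n x y = vdot n x' y'"
  unfolding vdot_def by (rule sum.cong) auto

lemma mvmult_cong: "(\<And>i. i < n \<Longrightarrow> x i = x' i) \<Longrightarrow> mvmult n M x = mvmult n M x'"
  unfolding mvmult_def by (intro ext sum.cong) auto

lemma vdot_zero_left: "(\<And>i. i < n \<Longrightarrow> x i = 0) \<Longrightarrow> vdot n x y = 0"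
  unfolding vdot_def by simp

lemma vdot_add_left: "vdot n (\<lambda>i. x i + y i) z = vdot n x z + vdot n y z"
  unfolding vdot_def by (simp add: algebra_simps sum.distrib)

lemma vdot_add_right: "vdot n z (\<lambda>i. x i + y i) = vdot n z x + vdot n z y"
  unfolding vdot_def by (simp add: algebra_simps sum.distrib)

lemma vdot_diff_left: "vdot n (\<lambda>i. x i - y i) z = vdot n x z - vdot n y z"
  unfolding vdot_def by (simp add: algebra_simps sum_subtractf)

lemma vdot_diff_right: "vdot n z (\<lambda>i. x i - y i) = vdot n z x - vdot n z y"
  unfolding vdot_def by (simp add: algebra_simps sum_subtractf)

lemma vdot_scale_left: "vdot n (\<lambda>i. c * x i) z = c * vdot n x z"
  unfolding vdot_def by (simp add: algebra_simps sum_distrib_left)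

lemma vdot_scale_right: "vdot n z (\<lambda>i. c * x i) = c * vdot n z x"
  unfolding vdot_def by (simp add: algebra_simps sum_distrib_left)

lemma vdot_sum_right: "vdot n z (\<lambda>i. \<Sum>e\<in>E. f e i) = (\<Sum>e\<in>E. vdot n z (f e))"
  unfolding vdot_def by (simp add: sum_distrib_left sum.swap[of _ E])

lemma mvmult_add_mat: "mvmult n (\<lambda>i j. A i j + B i j) x = (\<lambda>i. mvmult n A x i + mvmult n B x i)"
  unfolding mvmult_def by (simp add: algebra_simps sum.distrib)

lemma mvmult_diff_mat: "mvmult n (\<lambda>i j. A i j - B i j) x = (\<lambda>i. mvmult n A x i - mvmult n B x i)"
  unfolding mvmult_def by (simp add: algebra_simps sum_subtractf)

lemma mvmult_scale_mat: "mvmult n (\<lambda>i j. c * A i j) x = (\<lambda>i. c * mvmult n A x i)"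
  unfolding mvmult_def by (simp add: algebra_simps sum_distrib_left)

lemma mvmult_add: "mvmult n M (\<lambda>i. x i + y i) = (\<lambda>i. mvmult n M x i + mvmult n M y i)"
  unfolding mvmult_def by (simp add: algebra_simps sum.distrib)

lemma mvmult_diff: "mvmult n M (\<lambda>i. x i - y i) = (\<lambda>i. mvmult n M x i - mvmult n M y i)"
  unfolding mvmult_def by (simp add: algebra_simps sum_subtractf)

lemma mvmult_scale: "mvmult n M (\<lambda>i. c * x i) = (\<lambda>i. c * mvmult n M x i)"
  unfolding mvmult_def by (simp add: algebra_simps sum_distrib_left)

lemma qform_add_mat: "qform n (\<lambda>i j. A i j + B i j) x = qform n A x + qform n B x"
  unfolding qform_def mvmult_add_mat vdot_add_right by simp

lemma qform_diff_mat: "qform n (\<lambda>i j. A i j - B i j) x = qform n A x - qform n B x"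
  unfolding qform_def mvmult_diff_mat vdot_diff_right by simp

lemma qform_scale_mat: "qform n (\<lambda>i j. c * A i j) x = c * qform n A x"
  unfolding qform_def mvmult_scale_mat vdot_scale_right by simp

lemma vdot_std_basis: "i < n \<Longrightarrow> vdot n (std_basis i) x = x i"
  unfolding vdot_def std_basis_def by (simp add: if_distrib[of "\<lambda>y. y * _"] cong: if_cong)

lemma mvmult_std_basis: "i < n \<Longrightarrow> mvmult n M (std_basis i) = (\<lambda>j. M j i)"
  unfolding mvmult_def std_basis_def by (simp add: if_distrib[of "(*) _"] cong: if_cong)

lemma mat_sym_vdot: "mat_sym n M \<Longrightarrow> vdot n x (mvmult n M y) = vdot n (mvmult n M x) y"
  unfolding mat_sym_def vdot_def mvmult_def sum_distrib_left sum_distrib_right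
  by (subst sum.swap) (auto simp: algebra_simps intro!: sum.cong)

lemma qform_add_scaled:
  assumes "mat_sym n M"
  shows "qform n M (\<lambda>i. x i + c * y i) = qform n M x + 2 * c * vdot n x (mvmult n M y) + c\<^sup>2 * qform n M y"
proof -
  have "vdot n y (mvmult n M x) = vdot n x (mvmult n M y)"
    using mat_sym_vdot[OF assms, of y x] vdot_commute by metis
  then show ?thesis
    unfolding qform_def mvmult_add mvmult_scale vdot_add_left vdot_add_right vdot_scale_left vdot_scale_right
    by (simp add: power2_eq_square algebra_simps)
qed

lemma discriminant_nonpos:
  fixes a b c :: real
  assumes nonneg: "\<And>t. 0 \<le> a + 2 * b * t + c * t\<^sup>2" and "c \<ge> 0"
  shows "b\<^sup>2 \<le> a * c"
proof (cases "c = 0")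
  case True
  have "b = 0"
  proof (rule ccontr)
    assume "b \<noteq> 0"
    then have "a + 2 * b * (- (a + 1) / (2 * b)) = -1" by (simp add: field_simps)
    then show False using nonneg[of "- (a + 1) / (2 * b)"] True by simp
  qed
  then show ?thesis using True by simp
next
  case False
  then have c: "c > 0" using assms(2) by simp
  have "0 \<le> a + 2 * b * (- b / c) + c * (- b / c)\<^sup>2" by (rule nonneg)
  also have "\<dots> = a - b\<^sup>2 / c" using c by (simp add: field_simps power2_eq_square)
  finally show ?thesis using c by (simp add: field_simps mult.commute)
qed

lemma cauchy_schwarz_qform_sum:
  assumes sym: "mat_sym n X" and psd: "\<And>x. qform n X x \<ge> 0"
  shows "(\<Sum>e\<in>F. vdot n (a e) (mvmult n X (b e)))\<^sup>2 \<le> (\<Sum>e\<in>F. qform n X (a e)) * (\<Sum>e\<in>F. qform n X (b e))"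
proof (rule discriminant_nonpos)
  fix t
  have "0 \<le> (\<Sum>e\<in>F. qform n X (\<lambda>i. a e i + t * b e i))" by (intro sum_nonneg psd)
  also have "\<dots> = (\<Sum>e\<in>F. qform n X (a e)) + 2 * (\<Sum>e\<in>F. vdot n (a e) (mvmult n X (b e))) * t
      + (\<Sum>e\<in>F. qform n X (b e)) * t\<^sup>2"
    by (simp add: qform_add_scaled[OF sym] sum.distrib sum_distrib_left sum_distrib_right algebra_simps)
  finally show "0 \<le> \<dots>" .
qed (intro sum_nonneg psd)

lemma cauchy_schwarz_qform:
  assumes "mat_sym n X" and "\<And>x. qform n X x \<ge> 0"
  shows "(vdot n a (mvmult n X b))\<^sup>2 \<le> qform n X a * qform n X b"
  using cauchy_schwarz_qform_sum[OF assms, where F="{()}"] by simp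

lemma pos_def_sym: "pos_def n M \<Longrightarrow> mat_sym n M"
  unfolding pos_def_def by simp

lemma pos_def_qform_nonneg:
  assumes "pos_def n M" shows "qform n M x \<ge> 0"
proof (cases "\<exists>i<n. x i \<noteq> 0")
  case True then show ?thesis using assms unfolding pos_def_def by (auto intro: less_imp_le)
next
  case False then show ?thesis unfolding qform_def by (simp add: vdot_zero_left)
qed

lemma pos_def_add_psd:
  assumes "pos_def n M" "mat_sym n B" "\<And>x. qform n B x \<ge> 0"
  shows "pos_def n (\<lambda>i j. M i j + B i j)"
  unfolding pos_def_def
proof (intro conjI allI impI)
  show "mat_sym n (\<lambda>i j. M i j + B i j)"
    using assms(1,2) unfolding pos_def_def mat_sym_def by simp
  fix x :: "nat \<Rightarrow> real" assume "\<exists>i<n. x i \<noteq> 0"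
  then have "qform n M x > 0" using assms(1) unfolding pos_def_def by blast
  then show "qform n (\<lambda>i j. M i j + B i j) x > 0" using assms(3)[of x] by (simp add: qform_add_mat)
qed

lemma mvmult_as_jnf:
  "i < n \<Longrightarrow> v \<in> carrier_vec n \<Longrightarrow> (mat n n (\<lambda>(i, j). M i j) *\<^sub>v v) $ i = mvmult n M (\<lambda>j. v $ j) i"
  unfolding mvmult_def by (simp add: row_def scalar_prod_def atLeast0LessThan)

lemma mat_mult_as_jnf:
  assumes "i < n" "k < n" "B \<in> carrier_mat n n"
  shows "(mat n n (\<lambda>(i, j). M i j) * B) $$ (i, k) = (\<Sum>j<n. M i j * B $$ (j, k))"
    and "(B * mat n n (\<lambda>(i, j). M i j)) $$ (i, k) = (\<Sum>j<n. B $$ (i, j) * M j k)"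
  using assms by (simp_all add: row_def col_def scalar_prod_def atLeast0LessThan)

lemma pos_def_det_nonzero:
  assumes "pos_def n M"
  shows "det (mat n n (\<lambda>(i, j). M i j)) \<noteq> 0"
proof
  assume "det (mat n n (\<lambda>(i, j). M i j)) = 0"
  then obtain v where v: "v \<in> carrier_vec n" "v \<noteq> 0\<^sub>v n" "mat n n (\<lambda>(i, j). M i j) *\<^sub>v v = 0\<^sub>v n"
    using det_0_iff_vec_prod_zero_field[OF mat_carrier] by blast
  have "\<exists>i<n. v $ i \<noteq> 0"
    using v(1,2) by (metis carrier_vecD eq_vecI index_zero_vec)
  moreover have "mvmult n M (\<lambda>j. v $ j) i = 0" if "i < n" for i
    using mvmult_as_jnf[OF that v(1), symmetric] v(3) that by (simp del: index_mult_mat_vec)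
  then have "qform n M (\<lambda>j. v $ j) = 0"
    unfolding qform_def by (simp add: vdot_def)
  ultimately show False using assms unfolding pos_def_def by auto
qed

lemma mult_inverse_apply:
  assumes "\<And>k. k < n \<Longrightarrow> (\<Sum>j<n. A i j * B j k) = (if i = k then 1 else 0)" and "i < n"
  shows "mvmult n A (mvmult n B v) i = (v i :: real)"
proof -
  have "mvmult n A (mvmult n B v) i = (\<Sum>k<n. (\<Sum>j<n. A i j * B j k) * v k)"
    unfolding mvmult_def sum_distrib_left sum_distrib_right
    by (subst sum.swap) (simp add: mult.assoc)
  also have "\<dots> = v i" using assms by (simp add: if_distrib[of "\<lambda>y. y * _"] cong: if_cong)
  finally show ?thesis .
qed

lemma sym_inverse_exists:
  assumes M: "pos_def n M" shows "\<exists>Y. sym_inverse n M Y"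
proof -
  define A where "A = mat n n (\<lambda>(i, j). M i j)"
  have A: "A \<in> carrier_mat n n" unfolding A_def by simp
  obtain B where B: "B \<in> carrier_mat n n" "B * A = 1\<^sub>m n" "A * B = 1\<^sub>m n"
    using det_non_zero_imp_unit[OF A pos_def_det_nonzero[OF M, folded A_def], of "()"]
    unfolding Units_def ring_mat_def by auto
  define Y where "Y i j = B $$ (i, j)" for i j
  have MY: "mvmult n M (mvmult n Y v) i = v i" if "i < n" for v i
    using B(1,3) mat_mult_as_jnf(1)[OF that _ B(1), of _ M] that
    by (intro mult_inverse_apply) (auto simp: A_def Y_def)
  have YM: "mvmult n Y (mvmult n M v) i = v i" if "i < n" for v i
    using B(1,2) mat_mult_as_jnf(2)[OF that _ B(1), of _ M] that
    by (intro mult_inverse_apply) (auto simp: A_def Y_def)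
  have "Y i j = Y j i" if ij: "i < n" "j < n" for i j
  proof -
    have "Y i j = vdot n (std_basis i) (mvmult n Y (std_basis j))"
      using ij by (simp add: mvmult_std_basis vdot_std_basis)
    also have "\<dots> = vdot n (mvmult n M (mvmult n Y (std_basis i))) (mvmult n Y (std_basis j))"
      by (rule vdot_cong) (simp_all add: MY)
    also have "\<dots> = vdot n (mvmult n Y (std_basis i)) (mvmult n M (mvmult n Y (std_basis j)))"
      using mat_sym_vdot[OF pos_def_sym[OF M]] by simp
    also have "\<dots> = vdot n (mvmult n Y (std_basis i)) (std_basis j)"
      by (rule vdot_cong) (simp_all add: MY)
    also have "\<dots> = Y j i"
      using ij by (simp add: mvmult_std_basis vdot_std_basis vdot_commute)
    finally show ?thesis .
  qed
  then show ?thesis unfolding sym_inverse_def mat_sym_def using MY YM by blast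
qed

lemma sym_inverse_mat_inv: "pos_def n M \<Longrightarrow> sym_inverse n M (mat_inv n M)"
  unfolding mat_inv_def using sym_inverse_exists by (metis someI_ex)

lemma sym_inverse_sym: "sym_inverse n M Y \<Longrightarrow> mat_sym n Y"
  unfolding sym_inverse_def by simp

lemma sym_inverse_right: "sym_inverse n M Y \<Longrightarrow> i < n \<Longrightarrow> mvmult n M (mvmult n Y v) i = v i"
  unfolding sym_inverse_def by simp

lemma sym_inverse_left: "sym_inverse n M Y \<Longrightarrow> i < n \<Longrightarrow> mvmult n Y (mvmult n M v) i = v i"
  unfolding sym_inverse_def by simp

lemma sym_inverse_unique:
  assumes "sym_inverse n M Y" "sym_inverse n M Y'" "i < n"
  shows "mvmult n Y v i = mvmult n Y' v i"
proof -
  have "mvmult n Y v = mvmult n Y (mvmult n M (mvmult n Y' v))"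
    using sym_inverse_right[OF assms(2)] by (intro mvmult_cong) simp
  then show ?thesis using sym_inverse_left[OF assms(1,3)] by simp
qed

lemma sym_inverse_qform:
  assumes "sym_inverse n M Y"
  shows "qform n Y z = qform n M (mvmult n Y z)"
proof -
  have "qform n Y z = vdot n (mvmult n Y z) z"
    unfolding qform_def by (rule vdot_commute)
  also have "\<dots> = qform n M (mvmult n Y z)"
    unfolding qform_def by (rule vdot_cong) (simp_all add: sym_inverse_right[OF assms])
  finally show ?thesis .
qed

lemma sym_inverse_qform_nonneg: "pos_def n M \<Longrightarrow> sym_inverse n M Y \<Longrightarrow> qform n Y z \<ge> 0"
  using sym_inverse_qform pos_def_qform_nonneg by metis

lemma sym_inverse_qform_pos:
  assumes M: "pos_def n M" and Y: "sym_inverse n M Y" and nz: "\<exists>i<n. z i \<noteq> 0"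
  shows "qform n Y z > 0"
proof -
  have "\<exists>i<n. mvmult n Y z i \<noteq> 0"
  proof (rule ccontr)
    assume "\<not> ?thesis"
    then have "mvmult n M (mvmult n Y z) i = 0" for i
      unfolding mvmult_def[of n M] by simp
    then show False using nz sym_inverse_right[OF Y] by metis
  qed
  then show ?thesis using sym_inverse_qform[OF Y] M unfolding pos_def_def by auto
qed

lemma resolvent_identity:
  assumes Y: "sym_inverse n M Y" and Y': "sym_inverse n M' Y'" and i: "i < n"
  shows "mvmult n Y z i - mvmult n Y' z i = mvmult n Y (mvmult n (\<lambda>i j. M' i j - M i j) (mvmult n Y' z)) i"
    and "mvmult n Y z i - mvmult n Y' z i = mvmult n Y' (mvmult n (\<lambda>i j. M' i j - M i j) (mvmult n Y z)) i"
proof -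
  have "mvmult n Y (mvmult n M' (mvmult n Y' z)) = mvmult n Y z"
    using sym_inverse_right[OF Y'] by (intro mvmult_cong) simp
  then show "mvmult n Y z i - mvmult n Y' z i = mvmult n Y (mvmult n (\<lambda>i j. M' i j - M i j) (mvmult n Y' z)) i"
    unfolding mvmult_diff_mat mvmult_diff using sym_inverse_left[OF Y i] by simp
  have "mvmult n Y' (mvmult n M (mvmult n Y z)) = mvmult n Y' z"
    using sym_inverse_right[OF Y] by (intro mvmult_cong) simp
  then show "mvmult n Y z i - mvmult n Y' z i = mvmult n Y' (mvmult n (\<lambda>i j. M' i j - M i j) (mvmult n Y z)) i"
    unfolding mvmult_diff_mat mvmult_diff using sym_inverse_left[OF Y' i] by simp
qed

lemma mvmult_rank_one_add:
  "mvmult n (\<lambda>i j. M i j + t * w i * w j) x = (\<lambda>i. mvmult n M x i + t * w i * vdot n w x)"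
  unfolding mvmult_def vdot_def by (simp add: algebra_simps sum.distrib sum_distrib_left)

lemma mvmult_rank_one_diff:
  "mvmult n (\<lambda>i j. M i j - t * w i * w j) x = (\<lambda>i. mvmult n M x i - t * w i * vdot n w x)"
  unfolding mvmult_def vdot_def by (simp add: algebra_simps sum_subtractf sum_distrib_left)

lemma qform_rank_one_add: "qform n (\<lambda>i j. M i j + t * w i * w j) x = qform n M x + t * (vdot n w x)\<^sup>2"
  unfolding qform_def mvmult_rank_one_add vdot_def
  by (simp add: sum.distrib sum_distrib_left power2_eq_square algebra_simps)

lemma qform_rank_one_diff: "qform n (\<lambda>i j. M i j - t * w i * w j) x = qform n M x - t * (vdot n w x)\<^sup>2"
  unfolding qform_def mvmult_rank_one_diff vdot_def
  by (simp add: sum_subtractf sum_distrib_left power2_eq_square algebra_simps)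

lemma pos_def_rank_one_update:
  assumes M: "pos_def n M" and Y: "sym_inverse n M Y" and c: "1 + t * qform n Y w > 0"
  shows "pos_def n (\<lambda>i j. M i j + t * w i * w j)"
  unfolding pos_def_def
proof (intro conjI allI impI)
  show "mat_sym n (\<lambda>i j. M i j + t * w i * w j)"
    using pos_def_sym[OF M] unfolding mat_sym_def by simp
  fix x :: "nat \<Rightarrow> real" assume "\<exists>i<n. x i \<noteq> 0"
  then have q: "qform n M x > 0" using M unfolding pos_def_def by auto
  \<comment> \<open>Cauchy--Schwarz in the inner product of \<open>M\<close>, with \<open>w = M (Y w)\<close>\<close>
  have "vdot n w x = vdot n (mvmult n Y w) (mvmult n M x)"
    using mat_sym_vdot[OF pos_def_sym[OF M]] sym_inverse_right[OF Y]
    by (metis (no_types, lifting) vdot_cong)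
  then have wx: "(vdot n w x)\<^sup>2 \<le> qform n Y w * qform n M x"
    using cauchy_schwarz_qform[OF pos_def_sym[OF M] pos_def_qform_nonneg[OF M]]
    by (simp add: sym_inverse_qform[OF Y])
  show "qform n (\<lambda>i j. M i j + t * w i * w j) x > 0"
  proof (cases "t \<ge> 0")
    case True
    then show ?thesis unfolding qform_rank_one_add using q by (simp add: add_pos_nonneg)
  next
    case False
    then have "t * (qform n Y w * qform n M x) \<le> t * (vdot n w x)\<^sup>2"
      using wx by (intro mult_left_mono_neg) auto
    moreover have "(1 + t * qform n Y w) * qform n M x > 0" using q c by simp
    ultimately show ?thesis unfolding qform_rank_one_add by (simp add: algebra_simps)
  qed
qed

lemma sherman_morrison_right:
  assumes Y: "sym_inverse n M Y" and c: "1 + t * qform n Y w \<noteq> 0" and i: "i < n"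
  defines "y \<equiv> mvmult n Y w" and "c \<equiv> t / (1 + t * qform n Y w)"
  shows "mvmult n (\<lambda>i j. M i j + t * w i * w j) (mvmult n (\<lambda>i j. Y i j - c * y i * y j) v) i = v i"
proof -
  let ?Y' = "\<lambda>i j. Y i j - c * y i * y j"
  have Y'v: "mvmult n ?Y' v = (\<lambda>j. mvmult n Y v j - (c * vdot n y v) * y j)"
    unfolding mvmult_rank_one_diff by (simp add: algebra_simps)
  have My: "mvmult n M y i = w i" unfolding y_def by (rule sym_inverse_right[OF Y i])
  have wY: "vdot n w (mvmult n Y v) = vdot n y v"
    unfolding y_def by (rule mat_sym_vdot[OF sym_inverse_sym[OF Y]])
  have A: "mvmult n M (mvmult n ?Y' v) i = v i - (c * vdot n y v) * w i"
    unfolding Y'v mvmult_diff mvmult_scale using sym_inverse_right[OF Y i] My by simp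
  have B: "vdot n w (mvmult n ?Y' v) = vdot n y v - c * vdot n y v * qform n Y w"
    unfolding Y'v vdot_diff_right vdot_scale_right wY by (simp add: y_def qform_def)
  have "mvmult n (\<lambda>i j. M i j + t * w i * w j) (mvmult n ?Y' v) i
      = (v i - (c * vdot n y v) * w i) + t * w i * (vdot n y v - c * vdot n y v * qform n Y w)"
    by (simp only: mvmult_rank_one_add A B)
  also have "\<dots> = v i + w i * vdot n y v * (t - c * (1 + t * qform n Y w))"
    by (simp add: algebra_simps)
  finally have "mvmult n (\<lambda>i j. M i j + t * w i * w j) (mvmult n ?Y' v) i
      = v i + w i * vdot n y v * (t - c * (1 + t * qform n Y w))" .
  then show ?thesis using c unfolding c_def by simp
qed

lemma sherman_morrison_left:
  assumes M: "mat_sym n M" and Y: "sym_inverse n M Y" and c: "1 + t * qform n Y w \<noteq> 0" and i: "i < n"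
  defines "y \<equiv> mvmult n Y w" and "c \<equiv> t / (1 + t * qform n Y w)"
  shows "mvmult n (\<lambda>i j. Y i j - c * y i * y j) (mvmult n (\<lambda>i j. M i j + t * w i * w j) v) i = v i"
proof -
  let ?M' = "\<lambda>i j. M i j + t * w i * w j"
  have M'v: "mvmult n ?M' v = (\<lambda>i. mvmult n M v i + (t * vdot n w v) * w i)"
    unfolding mvmult_rank_one_add by (simp add: algebra_simps)
  have yM: "vdot n y (mvmult n M v) = vdot n w v"
  proof -
    have "vdot n y (mvmult n M v) = vdot n (mvmult n M y) v" by (rule mat_sym_vdot[OF M])
    also have "\<dots> = vdot n w v" by (rule vdot_cong) (simp_all add: y_def sym_inverse_right[OF Y])
    finally show ?thesis .
  qed
  have A: "mvmult n Y (mvmult n ?M' v) i = v i + (t * vdot n w v) * y i"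
    unfolding M'v mvmult_add mvmult_scale y_def using sym_inverse_left[OF Y i] by simp
  have B: "vdot n y (mvmult n ?M' v) = vdot n w v + (t * vdot n w v) * qform n Y w"
    unfolding M'v vdot_add_right vdot_scale_right yM by (simp add: y_def qform_def vdot_commute)
  have "mvmult n (\<lambda>i j. Y i j - c * y i * y j) (mvmult n ?M' v) i
      = (v i + (t * vdot n w v) * y i) - c * y i * (vdot n w v + (t * vdot n w v) * qform n Y w)"
    by (simp only: mvmult_rank_one_diff A B)
  also have "\<dots> = v i + y i * vdot n w v * (t - c * (1 + t * qform n Y w))"
    by (simp add: algebra_simps)
  finally have "mvmult n (\<lambda>i j. Y i j - c * y i * y j) (mvmult n ?M' v) i
      = v i + y i * vdot n w v * (t - c * (1 + t * qform n Y w))" .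
  then show ?thesis using c unfolding c_def by simp
qed

lemma sym_inverse_rank_one_update:
  assumes M: "pos_def n M" and Y: "sym_inverse n M Y" and c: "1 + t * qform n Y w > 0"
  shows "sym_inverse n (\<lambda>i j. M i j + t * w i * w j)
           (\<lambda>i j. Y i j - (t / (1 + t * qform n Y w)) * mvmult n Y w i * mvmult n Y w j)"
  unfolding sym_inverse_def
  using sherman_morrison_right[OF Y] sherman_morrison_left[OF pos_def_sym[OF M] Y] sym_inverse_sym[OF Y] c
  by (auto simp: mat_sym_def)

section \<open>Linear-size spectral sparsifiers\<close>

definition coord_proj :: "nat set \<Rightarrow> nat \<Rightarrow> nat \<Rightarrow> real" where
  "coord_proj J = (\<lambda>i j. if i = j \<and> i \<in> J then 1 else 0)"

lemma coord_proj_sym: "mat_sym n (coord_proj J)"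
  unfolding mat_sym_def coord_proj_def by auto

lemma qform_coord_proj:
  assumes "J \<subseteq> {..<n}" shows "qform n (coord_proj J) x = (\<Sum>j\<in>J. (x j)\<^sup>2)"
proof -
  have "mvmult n (coord_proj J) x i = (if i \<in> J then x i else 0)" for i
    using assms unfolding mvmult_def coord_proj_def by (auto simp: if_distrib[of "\<lambda>y. y * _"] cong: if_cong)
  then have "qform n (coord_proj J) x = (\<Sum>i\<in>{..<n} \<inter> J. (x i)\<^sup>2)"
    unfolding qform_def vdot_def sum.inter_restrict[OF finite_lessThan]
    by (intro sum.cong) (auto simp: power2_eq_square)
  also have "{..<n} \<inter> J = J" using assms by auto
  finally show ?thesis .
qed

locale gram_setting =
  fixes n :: nat and E :: "'e set" and w :: "'e \<Rightarrow> nat \<Rightarrow> real"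
  assumes finite_E: "finite E"
begin

definition wgram :: "('e \<Rightarrow> real) \<Rightarrow> nat \<Rightarrow> nat \<Rightarrow> real" where
  "wgram s = (\<lambda>i j. \<Sum>e\<in>E. s e * w e i * w e j)"

definition gram :: "nat \<Rightarrow> nat \<Rightarrow> real" where
  "gram = wgram (\<lambda>_. 1)"

text \<open>\<open>potential Y = tr (Y G)\<close>. For \<open>Y\<close> the inverse of a barrier matrix this is the barrier
  potential of Batson, Spielman and Srivastava, taken relative to \<open>G = gram\<close> instead of the identity.\<close>

definition potential :: "(nat \<Rightarrow> nat \<Rightarrow> real) \<Rightarrow> real" where
  "potential Y = (\<Sum>e\<in>E. qform n Y (w e))"

definition nondegenerate :: bool where
  "nondegenerate \<longleftrightarrow> (\<exists>e\<in>E. \<exists>i<n. w e i \<noteq> 0)"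

lemma qform_wgram: "qform n (wgram s) x = (\<Sum>e\<in>E. s e * (vdot n (w e) x)\<^sup>2)"
proof -
  have mv: "mvmult n (wgram s) x = (\<lambda>i. \<Sum>e\<in>E. (s e * vdot n (w e) x) * w e i)"
    unfolding mvmult_def wgram_def vdot_def sum_distrib_left sum_distrib_right
    by (subst sum.swap) (simp add: algebra_simps)
  show ?thesis
    unfolding qform_def mv vdot_sum_right vdot_scale_right
    by (simp add: vdot_commute[of n x] power2_eq_square mult.assoc)
qed

lemma qform_gram: "qform n gram x = (\<Sum>e\<in>E. (vdot n (w e) x)\<^sup>2)"
  unfolding gram_def qform_wgram by simp

lemma qform_gram_nonneg: "qform n gram x \<ge> 0"
  unfolding qform_gram by (simp add: sum_nonneg)

lemma wgram_sym: "mat_sym n (wgram s)"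
  unfolding mat_sym_def wgram_def by (simp add: mult.commute mult.left_commute)

lemma gram_sym: "mat_sym n gram"
  unfolding gram_def by (rule wgram_sym)

lemma wgram_update:
  assumes "e \<in> E"
  shows "wgram (s(e := s e + t)) = (\<lambda>i j. wgram s i j + t * w e i * w e j)"
proof (intro ext)
  fix i j
  have "wgram (s(e := s e + t)) i j = (\<Sum>f\<in>E. s f * w f i * w f j + (if f = e then t * w e i * w e j else 0))"
    unfolding wgram_def by (intro sum.cong) (auto simp: algebra_simps)
  also have "\<dots> = wgram s i j + t * w e i * w e j"
    unfolding wgram_def sum.distrib using assms finite_E by simp
  finally show "wgram (s(e := s e + t)) i j = wgram s i j + t * w e i * w e j" .
qed

lemma pos_def_add_gram:
  assumes "pos_def n M" "c \<ge> 0"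
  shows "pos_def n (\<lambda>i j. M i j + c * gram i j)"
  using assms gram_sym qform_gram_nonneg
  by (intro pos_def_add_psd) (auto simp: mat_sym_def qform_scale_mat)

lemma potential_mat_inv:
  assumes "pos_def n M" "sym_inverse n M Y"
  shows "potential (mat_inv n M) = potential Y"
  unfolding potential_def qform_def
  using sym_inverse_unique[OF sym_inverse_mat_inv[OF assms(1)] assms(2)]
  by (intro sum.cong refl vdot_cong) auto

lemma potential_rank_one_diff:
  "potential (\<lambda>i j. Y i j - c * y i * y j) = potential Y - c * qform n gram y"
  unfolding potential_def qform_rank_one_diff qform_gram
  by (simp add: sum_subtractf sum_distrib_left vdot_commute)

lemma potential_rank_one_update:
  assumes M: "pos_def n M" and c: "1 + t * qform n (mat_inv n M) v > 0"
  shows "pos_def n (\<lambda>i j. M i j + t * v i * v j)"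
    and "potential (mat_inv n (\<lambda>i j. M i j + t * v i * v j))
           = potential (mat_inv n M)
             - t / (1 + t * qform n (mat_inv n M) v) * qform n gram (mvmult n (mat_inv n M) v)"
proof -
  note Y = sym_inverse_mat_inv[OF M]
  show pd: "pos_def n (\<lambda>i j. M i j + t * v i * v j)"
    by (rule pos_def_rank_one_update[OF M Y c])
  show "potential (mat_inv n (\<lambda>i j. M i j + t * v i * v j))
           = potential (mat_inv n M)
             - t / (1 + t * qform n (mat_inv n M) v) * qform n gram (mvmult n (mat_inv n M) v)"
    unfolding potential_mat_inv[OF pd sym_inverse_rank_one_update[OF M Y c]] potential_rank_one_diff ..
qed

lemma pos_def_diff_gram:
  assumes N: "pos_def n N" and Z: "sym_inverse n N Z" and "\<delta> \<ge> 0" and "\<delta> * potential Z < 1"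
  shows "pos_def n (\<lambda>i j. N i j - \<delta> * gram i j)"
  unfolding pos_def_def
proof (intro conjI allI impI)
  show "mat_sym n (\<lambda>i j. N i j - \<delta> * gram i j)"
    using pos_def_sym[OF N] gram_sym unfolding mat_sym_def by simp
  fix x :: "nat \<Rightarrow> real" assume "\<exists>i<n. x i \<noteq> 0"
  then have q: "qform n N x > 0" using N unfolding pos_def_def by auto
  \<comment> \<open>Cauchy--Schwarz in the inner product of \<open>N\<close>, with \<open>w e = N (Z (w e))\<close>\<close>
  have "(vdot n (w e) x)\<^sup>2 \<le> qform n N x * qform n Z (w e)" for e
  proof -
    have "vdot n (w e) x = vdot n (mvmult n Z (w e)) (mvmult n N x)"
      using mat_sym_vdot[OF pos_def_sym[OF N]] sym_inverse_right[OF Z]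
      by (metis (no_types, lifting) vdot_cong)
    moreover have "(vdot n (mvmult n Z (w e)) (mvmult n N x))\<^sup>2 \<le> qform n N (mvmult n Z (w e)) * qform n N x"
      by (rule cauchy_schwarz_qform[OF pos_def_sym[OF N] pos_def_qform_nonneg[OF N]])
    ultimately show ?thesis by (simp add: sym_inverse_qform[OF Z] mult.commute)
  qed
  then have "qform n gram x \<le> qform n N x * potential Z"
    unfolding qform_gram potential_def sum_distrib_left by (rule sum_mono)
  then have "\<delta> * qform n gram x \<le> qform n N x * (\<delta> * potential Z)"
    using assms(3) by (simp add: mult_left_mono mult.left_commute)
  also have "\<dots> < qform n N x * 1"
    by (rule mult_strict_left_mono) (use assms(4) q in auto)
  finally show "qform n (\<lambda>i j. N i j - \<delta> * gram i j) x > 0"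
    by (simp add: qform_diff_mat qform_scale_mat)
qed

lemma inverse_gram_sum_pos:
  assumes M: "pos_def n M" and Y: "sym_inverse n M Y" and nondegenerate
  shows "(\<Sum>e\<in>E. qform n gram (mvmult n Y (w e))) > 0"
proof -
  obtain e0 i0 where e0: "e0 \<in> E" "i0 < n" "w e0 i0 \<noteq> 0"
    using \<open>nondegenerate\<close> unfolding nondegenerate_def by auto
  have "qform n Y (w e0) > 0"
    by (rule sym_inverse_qform_pos[OF M Y]) (use e0 in auto)
  then have "0 < (qform n Y (w e0))\<^sup>2" by simp
  also have "\<dots> = (vdot n (w e0) (mvmult n Y (w e0)))\<^sup>2" unfolding qform_def ..
  also have "\<dots> \<le> qform n gram (mvmult n Y (w e0))"
    unfolding qform_gram by (rule member_le_sum) (use e0 finite_E in auto)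
  also have "\<dots> \<le> (\<Sum>e\<in>E. qform n gram (mvmult n Y (w e)))"
    by (rule member_le_sum) (use e0 finite_E qform_gram_nonneg in auto)
  finally show ?thesis .
qed

lemma resolvent_gram:
  assumes Y: "sym_inverse n M Y" and Y': "sym_inverse n M' Y'"
    and M': "\<And>i j. M' i j = M i j + \<delta> * gram i j" and i: "i < n"
  shows "mvmult n Y z i - mvmult n Y' z i = \<delta> * mvmult n Y (mvmult n gram (mvmult n Y' z)) i"
    and "mvmult n Y z i - mvmult n Y' z i = \<delta> * mvmult n Y' (mvmult n gram (mvmult n Y z)) i"
proof -
  have "(\<lambda>i j. M' i j - M i j) = (\<lambda>i j. \<delta> * gram i j)" using M' by auto
  then show "mvmult n Y z i - mvmult n Y' z i = \<delta> * mvmult n Y (mvmult n gram (mvmult n Y' z)) i"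
    and "mvmult n Y z i - mvmult n Y' z i = \<delta> * mvmult n Y' (mvmult n gram (mvmult n Y z)) i"
    using resolvent_identity[OF Y Y' i] by (simp_all add: mvmult_scale_mat mvmult_scale)
qed

lemma resolvent_sums:
  assumes M: "pos_def n M" and M': "pos_def n M'" and M'_eq: "\<And>i j. M' i j = M i j + \<delta> * gram i j"
  defines "Y \<equiv> mat_inv n M" and "Y' \<equiv> mat_inv n M'"
    and "r \<equiv> \<Sum>e\<in>E. vdot n (mvmult n (mat_inv n M) (w e)) (mvmult n gram (mvmult n (mat_inv n M') (w e)))"
  shows "potential Y - potential Y' = \<delta> * r"
    and "r - (\<Sum>e\<in>E. qform n gram (mvmult n Y' (w e)))
           = \<delta> * (\<Sum>e\<in>E. qform n Y (mvmult n gram (mvmult n Y' (w e))))"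
    and "r - (\<Sum>e\<in>E. qform n gram (mvmult n Y (w e)))
           = - \<delta> * (\<Sum>e\<in>E. qform n Y' (mvmult n gram (mvmult n Y (w e))))"
proof -
  have Yinv: "sym_inverse n M Y" and Y'inv: "sym_inverse n M' Y'"
    unfolding Y_def Y'_def using sym_inverse_mat_inv M M' by auto
  note res = resolvent_gram[OF Yinv Y'inv M'_eq]
  have r: "r = (\<Sum>e\<in>E. vdot n (mvmult n Y (w e)) (mvmult n gram (mvmult n Y' (w e))))"
    unfolding r_def Y_def Y'_def ..
  define g where "g e = mvmult n gram (mvmult n Y' (w e))" for e
  have "potential Y - potential Y' = (\<Sum>e\<in>E. vdot n (w e) (\<lambda>i. mvmult n Y (w e) i - mvmult n Y' (w e) i))"
    unfolding potential_def qform_def vdot_diff_right by (simp add: sum_subtractf)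
  also have "\<dots> = (\<Sum>e\<in>E. vdot n (w e) (\<lambda>i. \<delta> * mvmult n Y (g e) i))"
    unfolding g_def by (intro sum.cong refl vdot_cong) (auto simp: res)
  finally show "potential Y - potential Y' = \<delta> * r"
    unfolding r g_def vdot_scale_right sum_distrib_left mat_sym_vdot[OF sym_inverse_sym[OF Yinv]] .
  have "vdot n (\<lambda>i. mvmult n Y (w e) i - mvmult n Y' (w e) i) (g e) = \<delta> * qform n Y (g e)" for e
  proof -
    have "vdot n (\<lambda>i. mvmult n Y (w e) i - mvmult n Y' (w e) i) (g e)
        = vdot n (\<lambda>i. \<delta> * mvmult n Y (g e) i) (g e)"
      unfolding g_def by (intro vdot_cong) (auto simp: res)
    then show ?thesis unfolding vdot_scale_left qform_def by (simp add: vdot_commute)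
  qed
  then show "r - (\<Sum>e\<in>E. qform n gram (mvmult n Y' (w e)))
      = \<delta> * (\<Sum>e\<in>E. qform n Y (mvmult n gram (mvmult n Y' (w e))))"
    unfolding r qform_def[of _ gram] g_def[symmetric] vdot_diff_left[symmetric] sum_subtractf[symmetric]
    by (simp add: sum_distrib_left)
  have "vdot n (mvmult n Y (w e)) (mvmult n gram (\<lambda>i. mvmult n Y' (w e) i - mvmult n Y (w e) i))
      = - \<delta> * qform n Y' (mvmult n gram (mvmult n Y (w e)))" for e
  proof -
    let ?h = "mvmult n gram (mvmult n Y (w e))"
    have "mvmult n gram (\<lambda>i. mvmult n Y' (w e) i - mvmult n Y (w e) i)
        = mvmult n gram (\<lambda>i. - \<delta> * mvmult n Y' ?h i)"
    proof (intro mvmult_cong)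
      fix i assume "i < n"
      from res(2)[OF this, of "w e"]
      show "mvmult n Y' (w e) i - mvmult n Y (w e) i = - \<delta> * mvmult n Y' ?h i" by simp
    qed
    then show ?thesis
      unfolding mvmult_scale qform_def by (simp only: vdot_scale_right mat_sym_vdot[OF gram_sym])
  qed
  then show "r - (\<Sum>e\<in>E. qform n gram (mvmult n Y (w e)))
      = - \<delta> * (\<Sum>e\<in>E. qform n Y' (mvmult n gram (mvmult n Y (w e))))"
    unfolding r qform_def[of _ gram] mvmult_diff vdot_diff_right sum_subtractf[symmetric]
    by (simp add: sum_distrib_left)
qed

lemma upper_potential_drop:
  assumes M: "pos_def n M" and \<delta>: "\<delta> > 0"
  defines "Y \<equiv> mat_inv n M" and "Y' \<equiv> mat_inv n (\<lambda>i j. M i j + \<delta> * gram i j)"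
  shows "\<delta> * (\<Sum>e\<in>E. qform n gram (mvmult n Y' (w e))) \<le> potential Y - potential Y'"
    and "nondegenerate \<Longrightarrow> potential Y' < potential Y"
proof -
  have M': "pos_def n (\<lambda>i j. M i j + \<delta> * gram i j)" using pos_def_add_gram M \<delta> by simp
  note sums = resolvent_sums[OF M M' refl, folded Y_def Y'_def]
  define r where "r = (\<Sum>e\<in>E. vdot n (mvmult n Y (w e)) (mvmult n gram (mvmult n Y' (w e))))"
  have "0 \<le> \<delta> * (\<Sum>e\<in>E. qform n Y (mvmult n gram (mvmult n Y' (w e))))"
    using sym_inverse_qform_nonneg[OF M sym_inverse_mat_inv[OF M]] \<delta> unfolding Y_def by (simp add: sum_nonneg)
  then have r: "(\<Sum>e\<in>E. qform n gram (mvmult n Y' (w e))) \<le> r" using sums(2) unfolding r_def by linarith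
  then show "\<delta> * (\<Sum>e\<in>E. qform n gram (mvmult n Y' (w e))) \<le> potential Y - potential Y'"
    using sums(1) \<delta> unfolding r_def[symmetric] by simp
  assume nondegenerate
  then have "r > 0"
    using inverse_gram_sum_pos[OF M' sym_inverse_mat_inv[OF M']] r unfolding Y'_def by linarith
  then show "potential Y' < potential Y" using sums(1) mult_pos_pos[OF \<delta>] unfolding r_def[symmetric] by fastforce
qed

lemma lower_potential_rise:
  assumes N: "pos_def n N" and \<delta>: "\<delta> > 0" and \<delta>Z: "\<delta> * potential (mat_inv n N) < 1" and nondegenerate
  defines "Z \<equiv> mat_inv n N" and "Z' \<equiv> mat_inv n (\<lambda>i j. N i j - \<delta> * gram i j)"
  shows "potential Z < potential Z'"
    and "1 / \<delta> - potential Z \<le> (\<Sum>e\<in>E. qform n gram (mvmult n Z' (w e))) / (potential Z' - potential Z) - potential Z'"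
proof -
  have Zinv: "sym_inverse n N Z" unfolding Z_def using sym_inverse_mat_inv[OF N] .
  have N': "pos_def n (\<lambda>i j. N i j - \<delta> * gram i j)"
    using pos_def_diff_gram[OF N Zinv] \<delta> \<delta>Z unfolding Z_def by simp
  note sums = resolvent_sums[OF N N', of "- \<delta>", folded Z_def Z'_def]
  define r where "r = (\<Sum>e\<in>E. vdot n (mvmult n Z (w e)) (mvmult n gram (mvmult n Z' (w e))))"
  define m where "m = (\<Sum>e\<in>E. qform n Z (mvmult n gram (mvmult n Z' (w e))))"
  have rise: "potential Z' - potential Z = \<delta> * r" using sums(1) unfolding r_def by simp
  have m: "m \<ge> 0" unfolding m_def using sym_inverse_qform_nonneg[OF N Zinv] by (simp add: sum_nonneg)
  have "0 \<le> \<delta> * (\<Sum>e\<in>E. qform n Z' (mvmult n gram (mvmult n Z (w e))))"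
    using sym_inverse_qform_nonneg[OF N' sym_inverse_mat_inv[OF N']] \<delta> unfolding Z'_def by (simp add: sum_nonneg)
  then have "r > 0"
    using sums(3) inverse_gram_sum_pos[OF N Zinv \<open>nondegenerate\<close>] unfolding r_def by simp
  then show "potential Z < potential Z'" using rise mult_pos_pos[OF \<delta>] by fastforce
  \<comment> \<open>Cauchy--Schwarz in the inner product of \<open>Z\<close>\<close>
  have "r\<^sup>2 \<le> potential Z * m"
    using cauchy_schwarz_qform_sum[OF sym_inverse_sym[OF Zinv] sym_inverse_qform_nonneg[OF N Zinv],
        where F=E and a=w and b="\<lambda>e. mvmult n gram (mvmult n Z' (w e))"]
    unfolding r_def m_def potential_def mat_sym_vdot[OF sym_inverse_sym[OF Zinv]] .
  then have "\<delta> * r\<^sup>2 \<le> (\<delta> * potential Z) * m" using \<delta> by (simp add: mult_left_mono)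
  also have "\<dots> \<le> 1 * m" using \<delta>Z m by (intro mult_right_mono) (auto simp: Z_def)
  finally have "\<delta> * r \<le> m / r" using \<open>r > 0\<close> by (simp add: field_simps power2_eq_square)
  moreover have "(\<Sum>e\<in>E. qform n gram (mvmult n Z' (w e))) = r + \<delta> * m"
    using sums(2) unfolding r_def m_def by simp
  then have "(\<Sum>e\<in>E. qform n gram (mvmult n Z' (w e))) / (potential Z' - potential Z) = 1 / \<delta> + m / r"
    using \<open>r > 0\<close> \<delta> unfolding rise by (simp add: add_divide_distrib)
  ultimately show "1 / \<delta> - potential Z
      \<le> (\<Sum>e\<in>E. qform n gram (mvmult n Z' (w e))) / (potential Z' - potential Z) - potential Z'"
    using rise by linarith
qed

lemma potential_trace: "potential Y = (\<Sum>i<n. \<Sum>j<n. gram i j * Y i j)"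
proof -
  have "potential Y = (\<Sum>e\<in>E. \<Sum>i<n. \<Sum>j<n. w e i * Y i j * w e j)"
    unfolding potential_def qform_def vdot_def mvmult_def by (simp add: sum_distrib_left mult.assoc)
  also have "\<dots> = (\<Sum>i<n. \<Sum>e\<in>E. \<Sum>j<n. w e i * Y i j * w e j)" by (rule sum.swap)
  also have "\<dots> = (\<Sum>i<n. \<Sum>j<n. \<Sum>e\<in>E. w e i * Y i j * w e j)" by (simp add: sum.swap[of _ E])
  also have "\<dots> = (\<Sum>i<n. \<Sum>j<n. gram i j * Y i j)"
    unfolding gram_def wgram_def by (simp add: sum_distrib_left algebra_simps)
  finally show ?thesis .
qed

end

text \<open>The BSS parameters: \<open>\<epsilon>\<^sub>U = \<epsilon>\<^sub>L = \<epsilon> / 6\<close>, \<open>\<delta>\<^sub>L = 1\<close>, \<open>\<delta>\<^sub>U = 1 / (1 - \<epsilon> / 2)\<close>, starting from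
  \<open>u\<^sub>0 = - l\<^sub>0 = 6 N / \<epsilon>\<close>; after \<open>K\<close> steps the barriers are at \<open>u\<close> and \<open>l\<close>.\<close>

lemma bss_parameters:
  fixes \<epsilon> N K :: real
  assumes \<epsilon>: "0 < \<epsilon>" "\<epsilon> < 1" and N: "N \<ge> 1" and K: "K \<ge> 12 * N / \<epsilon>\<^sup>2"
  defines "u \<equiv> 6 * N / \<epsilon> + K / (1 - \<epsilon> / 2)" and "l \<equiv> K - 6 * N / \<epsilon>"
  shows "0 < l" and "l \<le> u" and "1 - \<epsilon> \<le> 2 * l / (l + u)" and "2 * u / (l + u) \<le> 1 + \<epsilon>"
proof -
  define q where "q = 1 / (1 - \<epsilon> / 2)"
  have q: "1 \<le> q" "q - 1 \<le> \<epsilon>" unfolding q_def using \<epsilon> by (simp_all add: field_simps)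
  have u: "u = 6 * N / \<epsilon> + K * q" unfolding u_def q_def by simp
  have K\<epsilon>: "12 * N / \<epsilon> \<le> K * \<epsilon>"
    using mult_right_mono[OF K less_imp_le[OF \<epsilon>(1)]] \<epsilon>(1) by (simp add: power2_eq_square)
  have "12 * N / \<epsilon>\<^sup>2 > 0" using N \<epsilon> by simp
  then have K0: "K > 0" using K by linarith
  have "6 * N / \<epsilon> < 12 * N / \<epsilon>" using N \<epsilon> by (simp add: field_simps)
  moreover have "K * \<epsilon> < K" using K0 \<epsilon> by simp
  ultimately show l: "0 < l" unfolding l_def using K\<epsilon> by linarith
  have "0 \<le> K * (q - 1)" using K0 q by simp
  moreover have "0 \<le> 12 * N / \<epsilon>" using N \<epsilon> by simp
  ultimately show lu: "l \<le> u" unfolding u l_def by (simp add: algebra_simps)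
  have "K * (q - 1) \<le> K * \<epsilon>" using q K0 by simp
  moreover have "K * \<epsilon> * 2 \<le> \<epsilon> * (K * (1 + q))" using q K0 \<epsilon> by (simp add: algebra_simps)
  ultimately have "u - l \<le> \<epsilon> * (u + l)" unfolding u l_def using K\<epsilon> by (simp add: algebra_simps)
  then show "1 - \<epsilon> \<le> 2 * l / (l + u)" and "2 * u / (l + u) \<le> 1 + \<epsilon>"
    using l lu by (simp_all add: field_simps)
qed

locale bss = gram_setting n E w for n :: nat and E :: "'e set" and w +
  fixes J :: "nat set"
  assumes J_subset: "J \<subseteq> {..<n}"
begin

text \<open>The barriers \<open>u G - A + P\<close> and \<open>A - l G + P\<close> for \<open>A = wgram s\<close>, where \<open>P\<close> is the identity
  on the coordinates \<open>J\<close>: it makes the barriers invertible where \<open>G\<close> is singular, and it is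
  invisible on vectors vanishing on \<open>J\<close>.\<close>

definition upper :: "real \<Rightarrow> ('e \<Rightarrow> real) \<Rightarrow> nat \<Rightarrow> nat \<Rightarrow> real" where
  "upper u s = (\<lambda>i j. u * gram i j - wgram s i j + coord_proj J i j)"

definition lower :: "real \<Rightarrow> ('e \<Rightarrow> real) \<Rightarrow> nat \<Rightarrow> nat \<Rightarrow> real" where
  "lower l s = (\<lambda>i j. wgram s i j - l * gram i j + coord_proj J i j)"

definition upper_pot :: "real \<Rightarrow> ('e \<Rightarrow> real) \<Rightarrow> real" where
  "upper_pot u s = potential (mat_inv n (upper u s))"

definition lower_pot :: "real \<Rightarrow> ('e \<Rightarrow> real) \<Rightarrow> real" where
  "lower_pot l s = potential (mat_inv n (lower l s))"

definition upper_index :: "real \<Rightarrow> real \<Rightarrow> ('e \<Rightarrow> real) \<Rightarrow> 'e \<Rightarrow> real" where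
  "upper_index u \<delta> s e =
     qform n gram (mvmult n (mat_inv n (upper (u + \<delta>) s)) (w e)) / (upper_pot u s - upper_pot (u + \<delta>) s)
     + qform n (mat_inv n (upper (u + \<delta>) s)) (w e)"

definition lower_index :: "real \<Rightarrow> real \<Rightarrow> ('e \<Rightarrow> real) \<Rightarrow> 'e \<Rightarrow> real" where
  "lower_index l \<delta> s e =
     qform n gram (mvmult n (mat_inv n (lower (l + \<delta>) s)) (w e)) / (lower_pot (l + \<delta>) s - lower_pot l s)
     - qform n (mat_inv n (lower (l + \<delta>) s)) (w e)"

definition barrier_state :: "real \<Rightarrow> real \<Rightarrow> real \<Rightarrow> real \<Rightarrow> ('e \<Rightarrow> real) \<Rightarrow> bool" where
  "barrier_state eU eL u l s \<longleftrightarrow> (\<forall>e. s e \<ge> 0) \<and> pos_def n (upper u s) \<and> pos_def n (lower l s)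
     \<and> upper_pot u s \<le> eU \<and> lower_pot l s \<le> eL"

lemma upper_shift: "upper (u + \<delta>) s = (\<lambda>i j. upper u s i j + \<delta> * gram i j)"
  unfolding upper_def by (simp add: algebra_simps)

lemma lower_shift: "lower (l + \<delta>) s = (\<lambda>i j. lower l s i j - \<delta> * gram i j)"
  unfolding lower_def by (simp add: algebra_simps)

lemma upper_update: "e \<in> E \<Longrightarrow> upper u (s(e := s e + t)) = (\<lambda>i j. upper u s i j + (- t) * w e i * w e j)"
  unfolding upper_def wgram_update by (simp add: algebra_simps)

lemma lower_update: "e \<in> E \<Longrightarrow> lower l (s(e := s e + t)) = (\<lambda>i j. lower l s i j + t * w e i * w e j)"
  unfolding lower_def wgram_update by (simp add: algebra_simps)

lemma upper_pot_drop:
  assumes "pos_def n (upper u s)" "\<delta> > 0"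
  shows "\<delta> * (\<Sum>e\<in>E. qform n gram (mvmult n (mat_inv n (upper (u + \<delta>) s)) (w e)))
           \<le> upper_pot u s - upper_pot (u + \<delta>) s"
    and "nondegenerate \<Longrightarrow> upper_pot (u + \<delta>) s < upper_pot u s"
  using upper_potential_drop[OF assms] unfolding upper_pot_def upper_shift by auto

lemma lower_pot_rise:
  assumes "pos_def n (lower l s)" "\<delta> > 0" "\<delta> * lower_pot l s < 1" nondegenerate
  shows "lower_pot l s < lower_pot (l + \<delta>) s"
    and "1 / \<delta> - lower_pot l s \<le> (\<Sum>e\<in>E. qform n gram (mvmult n (mat_inv n (lower (l + \<delta>) s)) (w e)))
           / (lower_pot (l + \<delta>) s - lower_pot l s) - lower_pot (l + \<delta>) s"
  using lower_potential_rise[OF assms[unfolded lower_pot_def]] unfolding lower_pot_def lower_shift by auto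

lemma upper_index_sum:
  assumes "pos_def n (upper u s)" "\<delta> > 0" nondegenerate
  shows "(\<Sum>e\<in>E. upper_index u \<delta> s e) \<le> 1 / \<delta> + upper_pot u s"
proof -
  let ?Y' = "mat_inv n (upper (u + \<delta>) s)"
  let ?D = "upper_pot u s - upper_pot (u + \<delta>) s"
  have D: "?D > 0" using upper_pot_drop(2)[OF assms] by simp
  have "(\<Sum>e\<in>E. qform n gram (mvmult n ?Y' (w e))) / ?D \<le> 1 / \<delta>"
    using upper_pot_drop(1)[OF assms(1,2)] D assms(2) by (simp add: field_simps mult.commute)
  moreover have "(\<Sum>e\<in>E. qform n ?Y' (w e)) = upper_pot (u + \<delta>) s"
    unfolding upper_pot_def potential_def ..
  ultimately show ?thesis
    using D unfolding upper_index_def sum.distrib sum_divide_distrib[symmetric] by linarith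
qed

lemma lower_index_sum:
  assumes "pos_def n (lower l s)" "\<delta> > 0" "\<delta> * lower_pot l s < 1" nondegenerate
  shows "1 / \<delta> - lower_pot l s \<le> (\<Sum>e\<in>E. lower_index l \<delta> s e)"
proof -
  have "(\<Sum>e\<in>E. qform n (mat_inv n (lower (l + \<delta>) s)) (w e)) = lower_pot (l + \<delta>) s"
    unfolding lower_pot_def potential_def ..
  then show ?thesis
    using lower_pot_rise(2)[OF assms]
    unfolding lower_index_def sum_subtractf sum_divide_distrib[symmetric] by linarith
qed

lemma upper_step:
  assumes M: "pos_def n (upper u s)" and \<delta>: "\<delta> > 0" and nondegenerate and e: "e \<in> E"
    and t: "t > 0" "t * upper_index u \<delta> s e < 1"
  shows "pos_def n (upper (u + \<delta>) (s(e := s e + t)))"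
    and "upper_pot (u + \<delta>) (s(e := s e + t)) \<le> upper_pot u s"
proof -
  have M': "pos_def n (upper (u + \<delta>) s)" unfolding upper_shift using pos_def_add_gram M \<delta> by simp
  define a where "a = qform n (mat_inv n (upper (u + \<delta>) s)) (w e)"
  define b where "b = qform n gram (mvmult n (mat_inv n (upper (u + \<delta>) s)) (w e))"
  define D where "D = upper_pot u s - upper_pot (u + \<delta>) s"
  have D: "D > 0" unfolding D_def using upper_pot_drop(2)[OF M \<delta> \<open>nondegenerate\<close>] by simp
  have b: "b \<ge> 0" unfolding b_def by (rule qform_gram_nonneg)
  have tU: "t * b / D + t * a < 1" using t unfolding upper_index_def a_def b_def D_def by (simp add: algebra_simps)
  moreover have "t * b / D \<ge> 0" using t b D by simp
  ultimately have ta: "t * a < 1" by linarith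
  then have c: "1 + (- t) * qform n (mat_inv n (upper (u + \<delta>) s)) (w e) > 0" unfolding a_def by simp
  note rank_one = potential_rank_one_update[OF M' c, folded upper_update[OF e] upper_pot_def]
  show "pos_def n (upper (u + \<delta>) (s(e := s e + t)))" by (rule rank_one(1))
  have "t * b < D * (1 - t * a)" using tU D by (simp add: field_simps)
  then have "t / (1 - t * a) * b \<le> D" using ta by (simp add: field_simps)
  then show "upper_pot (u + \<delta>) (s(e := s e + t)) \<le> upper_pot u s"
    unfolding rank_one(2) a_def[symmetric] b_def[symmetric] using D_def by simp
qed

lemma lower_step:
  assumes N: "pos_def n (lower l s)" and \<delta>: "\<delta> > 0" "\<delta> * lower_pot l s < 1" and nondegenerate
    and e: "e \<in> E" and t: "t > 0" "1 < t * lower_index l \<delta> s e"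
  shows "pos_def n (lower (l + \<delta>) (s(e := s e + t)))"
    and "lower_pot (l + \<delta>) (s(e := s e + t)) \<le> lower_pot l s"
proof -
  have N': "pos_def n (lower (l + \<delta>) s)"
    unfolding lower_shift using pos_def_diff_gram[OF N sym_inverse_mat_inv[OF N]] \<delta>
    unfolding lower_pot_def by simp
  define a where "a = qform n (mat_inv n (lower (l + \<delta>) s)) (w e)"
  define b where "b = qform n gram (mvmult n (mat_inv n (lower (l + \<delta>) s)) (w e))"
  define D where "D = lower_pot (l + \<delta>) s - lower_pot l s"
  have D: "D > 0" unfolding D_def using lower_pot_rise(1)[OF N \<delta> \<open>nondegenerate\<close>] by simp
  have a: "a \<ge> 0" unfolding a_def by (rule sym_inverse_qform_nonneg[OF N' sym_inverse_mat_inv[OF N']])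
  then have c: "1 + t * qform n (mat_inv n (lower (l + \<delta>) s)) (w e) > 0"
    using mult_nonneg_nonneg[OF less_imp_le[OF t(1)] a] unfolding a_def by linarith
  note rank_one = potential_rank_one_update[OF N' c, folded lower_update[OF e] lower_pot_def]
  show "pos_def n (lower (l + \<delta>) (s(e := s e + t)))" by (rule rank_one(1))
  have "1 < t * b / D - t * a" using t unfolding lower_index_def a_def b_def D_def by (simp add: algebra_simps)
  then have "D * (1 + t * a) < t * b" using D by (simp add: field_simps)
  moreover have "1 + t * a > 0" using c unfolding a_def .
  ultimately have "D \<le> t * b / (1 + t * a)" by (simp add: pos_le_divide_eq)
  then show "lower_pot (l + \<delta>) (s(e := s e + t)) \<le> lower_pot l s"
    unfolding rank_one(2) a_def[symmetric] b_def[symmetric] using D_def by simp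
qed

lemma bss_step:
  assumes state: "barrier_state eU eL u l s" and k: "card {e\<in>E. s e \<noteq> 0} \<le> k"
    and dU: "dU > 0" and dL: "dL > 0" "dL * eL < 1" and gap: "1 / dU + eU < 1 / dL - eL"
    and nondegenerate
  shows "\<exists>s'. barrier_state eU eL (u + dU) (l + dL) s' \<and> card {e\<in>E. s' e \<noteq> 0} \<le> Suc k"
proof -
  have s: "\<forall>e. s e \<ge> 0" and M: "pos_def n (upper u s)" and N: "pos_def n (lower l s)"
    and pU: "upper_pot u s \<le> eU" and pL: "lower_pot l s \<le> eL"
    using state unfolding barrier_state_def by auto
  have dLpL: "dL * lower_pot l s < 1"
    using dL mult_left_mono[OF pL less_imp_le[OF dL(1)]] by linarith
  let ?U = "upper_index u dU s" and ?L = "lower_index l dL s"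
  have "(\<Sum>e\<in>E. ?U e) < (\<Sum>e\<in>E. ?L e)"
    using upper_index_sum[OF M dU \<open>nondegenerate\<close>] lower_index_sum[OF N dL(1) dLpL \<open>nondegenerate\<close>]
      pU pL gap by linarith
  then obtain e where e: "e \<in> E" and UL: "?U e < ?L e"
    using sum_mono[of E ?L ?U] by (meson not_le)
  have "upper_pot (u + dU) s < upper_pot u s" by (rule upper_pot_drop(2)[OF M dU \<open>nondegenerate\<close>])
  then have U0: "?U e \<ge> 0"
    unfolding upper_index_def using sym_inverse_qform_nonneg[OF _ sym_inverse_mat_inv] qform_gram_nonneg
      pos_def_add_gram[OF M less_imp_le[OF dU], folded upper_shift]
    by simp
  define t where "t = 2 / (?U e + ?L e)"
  have t: "t > 0" "t * ?U e < 1" "1 < t * ?L e" unfolding t_def using U0 UL by (simp_all add: field_simps)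
  define s' where "s' = s(e := s e + t)"
  have state': "barrier_state eU eL (u + dU) (l + dL) s'"
    unfolding barrier_state_def s'_def
    using s t upper_step[OF M dU \<open>nondegenerate\<close> e t(1,2)] lower_step[OF N dL(1) dLpL \<open>nondegenerate\<close> e t(1,3)]
      pU pL by auto
  have "{f\<in>E. s' f \<noteq> 0} \<subseteq> insert e {f\<in>E. s f \<noteq> 0}" unfolding s'_def by auto
  then have "card {f\<in>E. s' f \<noteq> 0} \<le> card (insert e {f\<in>E. s f \<noteq> 0})"
    by (rule card_mono[rotated]) (use finite_E in simp)
  also have "\<dots> \<le> Suc k" using k by (intro card_insert_le_m1) auto
  finally show ?thesis using state' by blast
qed

lemma bss_iterate:
  assumes init: "barrier_state eU eL u l (\<lambda>_. 0)"
    and "dU > 0" "dL > 0" "dL * eL < 1" "1 / dU + eU < 1 / dL - eL" nondegenerate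
  shows "\<exists>s. barrier_state eU eL (u + real k * dU) (l + real k * dL) s \<and> card {e\<in>E. s e \<noteq> 0} \<le> k"
proof (induction k)
  case 0
  show ?case using init by (intro exI[of _ "\<lambda>_. 0"]) simp
next
  case (Suc k)
  then obtain s where "barrier_state eU eL (u + real k * dU) (l + real k * dL) s" "card {e\<in>E. s e \<noteq> 0} \<le> k"
    by blast
  from bss_step[OF this assms(2-)] show ?case by (simp add: algebra_simps)
qed

lemma upper_zero: "upper u (\<lambda>_. 0) = (\<lambda>i j. u * gram i j + coord_proj J i j)"
  unfolding upper_def wgram_def by simp

lemma lower_zero: "lower (- u) (\<lambda>_. 0) = (\<lambda>i j. u * gram i j + coord_proj J i j)"
  unfolding lower_def wgram_def by simp

text \<open>Both barriers start at \<open>c G + P\<close>, whose potential is at most \<open>n / c\<close> since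
  \<open>c \<cdot> tr((c G + P)\<inverse> G) = n - tr((c G + P)\<inverse> P)\<close>.\<close>

lemma barrier_init:
  assumes GP: "pos_def n (\<lambda>i j. gram i j + coord_proj J i j)" and c: "c \<ge> 1"
  shows "pos_def n (\<lambda>i j. c * gram i j + coord_proj J i j)"
    and "c * potential (mat_inv n (\<lambda>i j. c * gram i j + coord_proj J i j)) \<le> n"
proof -
  let ?M = "\<lambda>i j. c * gram i j + coord_proj J i j"
  have "pos_def n (\<lambda>i j. (gram i j + coord_proj J i j) + (c - 1) * gram i j)"
    using pos_def_add_gram[OF GP] c by simp
  then show pd: "pos_def n ?M" by (simp add: algebra_simps)
  define Y where "Y = mat_inv n ?M"
  have Y: "sym_inverse n ?M Y" unfolding Y_def by (rule sym_inverse_mat_inv[OF pd])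
  have row: "(\<Sum>j<n. ?M i j * Y i j) = 1" if i: "i < n" for i
  proof -
    have "(\<Sum>j<n. ?M i j * Y i j) = mvmult n ?M (mvmult n Y (std_basis i)) i"
      using sym_inverse_sym[OF Y] i unfolding mvmult_std_basis[OF i] mat_sym_def
      by (simp add: mvmult_def)
    also have "\<dots> = 1" using sym_inverse_right[OF Y i] by (simp add: std_basis_def)
    finally show ?thesis .
  qed
  have diag: "(\<Sum>j<n. coord_proj J i j * Y i j) \<ge> 0" if i: "i < n" for i
  proof -
    have "qform n Y (std_basis i) = Y i i"
      unfolding qform_def mvmult_std_basis[OF i] vdot_std_basis[OF i] ..
    then have "Y i i \<ge> 0" using sym_inverse_qform_nonneg[OF pd Y] by metis
    moreover have "(\<Sum>j<n. coord_proj J i j * Y i j) = (\<Sum>j<n. if j = i then (if i \<in> J then Y i i else 0) else 0)"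
      by (intro sum.cong) (auto simp: coord_proj_def)
    ultimately show ?thesis using i by simp
  qed
  have "c * potential Y = (\<Sum>i<n. \<Sum>j<n. ?M i j * Y i j) - (\<Sum>i<n. \<Sum>j<n. coord_proj J i j * Y i j)"
    unfolding potential_trace by (simp add: sum_distrib_left sum_subtractf[symmetric] algebra_simps)
  also have "\<dots> \<le> n"
  proof -
    have "(\<Sum>i<n. \<Sum>j<n. ?M i j * Y i j) = n" using row by simp
    moreover have "(\<Sum>i<n. \<Sum>j<n. coord_proj J i j * Y i j) \<ge> 0" by (intro sum_nonneg diag) simp
    ultimately show ?thesis by linarith
  qed
  finally show "c * potential (mat_inv n ?M) \<le> n" unfolding Y_def .
qed

lemma barrier_state_scaled_bounds:
  assumes state: "barrier_state eU eL u l s" and l: "0 < l" "l \<le> u" and x: "\<forall>j\<in>J. x j = 0"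
  shows "2 * l / (l + u) * qform n gram x \<le> qform n (wgram (\<lambda>e. 2 / (l + u) * s e)) x"
    and "qform n (wgram (\<lambda>e. 2 / (l + u) * s e)) x \<le> 2 * u / (l + u) * qform n gram x"
proof -
  have P: "qform n (coord_proj J) x = 0" unfolding qform_coord_proj[OF J_subset] using x by simp
  have "qform n (lower l s) x \<ge> 0" "qform n (upper u s) x \<ge> 0"
    using state pos_def_qform_nonneg unfolding barrier_state_def by auto
  then have lo: "l * qform n gram x \<le> qform n (wgram s) x" and hi: "qform n (wgram s) x \<le> u * qform n gram x"
    unfolding lower_def upper_def qform_add_mat qform_diff_mat qform_scale_mat P by simp_all
  have scale: "qform n (wgram (\<lambda>e. 2 / (l + u) * s e)) x = 2 / (l + u) * qform n (wgram s) x"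
    unfolding qform_wgram by (simp add: sum_distrib_left mult.assoc)
  have c: "2 / (l + u) \<ge> 0" using l by simp
  show "2 * l / (l + u) * qform n gram x \<le> qform n (wgram (\<lambda>e. 2 / (l + u) * s e)) x"
    using mult_left_mono[OF lo c] unfolding scale by simp
  show "qform n (wgram (\<lambda>e. 2 / (l + u) * s e)) x \<le> 2 * u / (l + u) * qform n gram x"
    using mult_left_mono[OF hi c] unfolding scale by simp
qed

lemma bss_sparsifier_vanishing_on:
  assumes GP: "pos_def n (\<lambda>i j. gram i j + coord_proj J i j)" and \<epsilon>: "0 < \<epsilon>" "\<epsilon> < 1"
  shows "\<exists>s. (\<forall>e. s e \<ge> 0) \<and> card {e\<in>E. s e \<noteq> 0} \<le> nat \<lceil>12 / \<epsilon>\<^sup>2\<rceil> * n \<and>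
     (\<forall>x. (\<forall>j\<in>J. x j = 0) \<longrightarrow>
        (1 - \<epsilon>) * qform n gram x \<le> qform n (wgram s) x \<and> qform n (wgram s) x \<le> (1 + \<epsilon>) * qform n gram x)"
proof (cases nondegenerate)
  case False
  then have "qform n gram x = 0" for x
    unfolding qform_gram nondegenerate_def by (simp add: vdot_zero_left)
  then show ?thesis by (intro exI[of _ "\<lambda>_. 0"]) (simp add: qform_wgram)
next
  case True
  then have n: "real n \<ge> 1" unfolding nondegenerate_def by auto
  define K where "K = nat \<lceil>12 / \<epsilon>\<^sup>2\<rceil> * n"
  define u0 where "u0 = 6 * real n / \<epsilon>"
  have K: "real K \<ge> 12 * real n / \<epsilon>\<^sup>2"
    using mult_right_mono[OF real_nat_ceiling_ge[of "12 / \<epsilon>\<^sup>2"], of "real n"] unfolding K_def by simp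
  have u0: "u0 \<ge> 1" unfolding u0_def using \<epsilon> n by (simp add: field_simps)
  have "barrier_state (\<epsilon> / 6) (\<epsilon> / 6) u0 (- u0) (\<lambda>_. 0)"
    unfolding barrier_state_def upper_pot_def lower_pot_def upper_zero lower_zero
    using barrier_init[OF GP u0] \<epsilon> n unfolding u0_def by (simp add: field_simps)
  from bss_iterate[OF this, of "1 / (1 - \<epsilon> / 2)" 1 K] True \<epsilon>
  obtain s where s: "barrier_state (\<epsilon> / 6) (\<epsilon> / 6) (u0 + K / (1 - \<epsilon> / 2)) (K - u0) s"
    and card: "card {e\<in>E. s e \<noteq> 0} \<le> K"
    by (auto simp: field_simps)
  define u l where "u = u0 + K / (1 - \<epsilon> / 2)" and "l = K - u0"
  note param = bss_parameters[OF \<epsilon> n K, folded u0_def, folded u_def l_def]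
  define s' where "s' = (\<lambda>e. 2 / (l + u) * s e)"
  have c: "2 / (l + u) > 0" using param(1,2) by simp
  have "(1 - \<epsilon>) * qform n gram x \<le> qform n (wgram s') x \<and> qform n (wgram s') x \<le> (1 + \<epsilon>) * qform n gram x"
    if "\<forall>j\<in>J. x j = 0" for x
  proof -
    note bounds = barrier_state_scaled_bounds[OF s[folded u_def l_def] param(1,2) that, folded s'_def]
    have "(1 - \<epsilon>) * qform n gram x \<le> 2 * l / (l + u) * qform n gram x"
      by (rule mult_right_mono[OF param(3) qform_gram_nonneg])
    moreover have "2 * u / (l + u) * qform n gram x \<le> (1 + \<epsilon>) * qform n gram x"
      by (rule mult_right_mono[OF param(4) qform_gram_nonneg])
    ultimately show ?thesis using bounds by linarith
  qed
  moreover have "{e\<in>E. s' e \<noteq> 0} = {e\<in>E. s e \<noteq> 0}" using c unfolding s'_def by auto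
  moreover have "\<forall>e. s' e \<ge> 0" using s c unfolding s'_def barrier_state_def by simp
  ultimately show ?thesis using card unfolding K_def by (intro exI[of _ s']) simp
qed

end

context gram_setting
begin

definition coords_eliminable :: "nat set \<Rightarrow> bool" where
  "coords_eliminable J \<longleftrightarrow> (\<forall>x. \<exists>x'. (\<forall>j\<in>J. x' j = 0) \<and> (\<forall>e\<in>E. vdot n (w e) x' = vdot n (w e) x))"

lemma coords_eliminable_insert:
  assumes J: "J \<subseteq> {..<n}" and elim: "coords_eliminable J"
    and not_pd: "\<not> pos_def n (\<lambda>i j. gram i j + coord_proj J i j)"
  shows "\<exists>i<n. i \<notin> J \<and> coords_eliminable (insert i J)"
proof -
  have "mat_sym n (\<lambda>i j. gram i j + coord_proj J i j)"
    using gram_sym coord_proj_sym unfolding mat_sym_def by simp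
  then obtain x i where x: "i < n" "x i \<noteq> 0" and q: "qform n (\<lambda>i j. gram i j + coord_proj J i j) x \<le> 0"
    using not_pd unfolding pos_def_def by (auto simp: not_less)
  have q: "(\<Sum>e\<in>E. (vdot n (w e) x)\<^sup>2) + (\<Sum>j\<in>J. (x j)\<^sup>2) \<le> 0"
    using q unfolding qform_add_mat qform_gram qform_coord_proj[OF J] .
  have "(\<Sum>e\<in>E. (vdot n (w e) x)\<^sup>2) \<ge> 0" "(\<Sum>j\<in>J. (x j)\<^sup>2) \<ge> 0" by (simp_all add: sum_nonneg)
  then have "(\<Sum>e\<in>E. (vdot n (w e) x)\<^sup>2) = 0" "(\<Sum>j\<in>J. (x j)\<^sup>2) = 0" using q by linarith+
  moreover have "finite J" using J finite_subset by blast
  ultimately have xE: "\<forall>e\<in>E. vdot n (w e) x = 0" and xJ: "\<forall>j\<in>J. x j = 0"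
    using finite_E by (simp_all add: sum_nonneg_eq_0_iff)
  \<comment> \<open>\<open>x\<close> is invisible to all \<open>w e\<close>, so any vector can be corrected by a multiple of \<open>x\<close> to vanish at \<open>i\<close>\<close>
  have "coords_eliminable (insert i J)"
    unfolding coords_eliminable_def
  proof
    fix y
    obtain y' where y': "\<forall>j\<in>J. y' j = 0" "\<forall>e\<in>E. vdot n (w e) y' = vdot n (w e) y"
      using elim unfolding coords_eliminable_def by blast
    let ?y = "\<lambda>j. y' j - (y' i / x i) * x j"
    have "\<forall>j\<in>insert i J. ?y j = 0" using y'(1) xJ x(2) by auto
    moreover have "\<forall>e\<in>E. vdot n (w e) ?y = vdot n (w e) y"
      unfolding vdot_diff_right vdot_scale_right using xE y'(2) by simp
    ultimately show "\<exists>x'. (\<forall>j\<in>insert i J. x' j = 0) \<and> (\<forall>e\<in>E. vdot n (w e) x' = vdot n (w e) y)"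
      by (intro exI[of _ ?y]) blast
  qed
  then show ?thesis using x xJ by auto
qed

lemma exists_regularizing_coords:
  "\<exists>J \<subseteq> {..<n}. pos_def n (\<lambda>i j. gram i j + coord_proj J i j) \<and> coords_eliminable J"
proof -
  have "\<exists>J' \<subseteq> {..<n}. pos_def n (\<lambda>i j. gram i j + coord_proj J' i j) \<and> coords_eliminable J'"
    if "J \<subseteq> {..<n}" "coords_eliminable J" for J
    using that
  proof (induction "card ({..<n} - J)" arbitrary: J rule: less_induct)
    case less
    show ?case
    proof (cases "pos_def n (\<lambda>i j. gram i j + coord_proj J i j)")
      case True
      then show ?thesis using less.prems by blast
    next
      case False
      then obtain i where i: "i < n" "i \<notin> J" and elim: "coords_eliminable (insert i J)"
        using coords_eliminable_insert[OF less.prems] by blast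
      have "card ({..<n} - insert i J) < card ({..<n} - J)"
        using i by (intro psubset_card_mono) auto
      then show ?thesis using less.hyps[OF _ _ elim] less.prems(1) i by blast
    qed
  qed
  moreover have "coords_eliminable {}" unfolding coords_eliminable_def by blast
  ultimately show ?thesis by blast
qed

theorem spectral_sparsifier:
  assumes "0 < \<epsilon>" "\<epsilon> < 1"
  shows "\<exists>s. (\<forall>e. s e \<ge> 0) \<and> card {e\<in>E. s e \<noteq> 0} \<le> nat \<lceil>12 / \<epsilon>\<^sup>2\<rceil> * n \<and>
     (\<forall>x. (1 - \<epsilon>) * (\<Sum>e\<in>E. (vdot n (w e) x)\<^sup>2) \<le> (\<Sum>e\<in>E. s e * (vdot n (w e) x)\<^sup>2) \<and>
          (\<Sum>e\<in>E. s e * (vdot n (w e) x)\<^sup>2) \<le> (1 + \<epsilon>) * (\<Sum>e\<in>E. (vdot n (w e) x)\<^sup>2))"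
proof -
  obtain J where J: "J \<subseteq> {..<n}" "pos_def n (\<lambda>i j. gram i j + coord_proj J i j)" "coords_eliminable J"
    using exists_regularizing_coords by blast
  interpret bss n E w J by unfold_locales (use finite_E J in auto)
  obtain s where s: "\<forall>e. s e \<ge> 0" "card {e\<in>E. s e \<noteq> 0} \<le> nat \<lceil>12 / \<epsilon>\<^sup>2\<rceil> * n"
    and bounds: "\<And>x. \<forall>j\<in>J. x j = 0 \<Longrightarrow>
      (1 - \<epsilon>) * qform n gram x \<le> qform n (wgram s) x \<and> qform n (wgram s) x \<le> (1 + \<epsilon>) * qform n gram x"
    using bss_sparsifier_vanishing_on[OF J(2) assms] by blast
  have "(1 - \<epsilon>) * (\<Sum>e\<in>E. (vdot n (w e) x)\<^sup>2) \<le> (\<Sum>e\<in>E. s e * (vdot n (w e) x)\<^sup>2) \<and>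
        (\<Sum>e\<in>E. s e * (vdot n (w e) x)\<^sup>2) \<le> (1 + \<epsilon>) * (\<Sum>e\<in>E. (vdot n (w e) x)\<^sup>2)" for x
  proof -
    obtain x' where "\<forall>j\<in>J. x' j = 0" and x': "\<forall>e\<in>E. vdot n (w e) x' = vdot n (w e) x"
      using J(3) unfolding coords_eliminable_def by blast
    from bounds[OF this(1)] show ?thesis unfolding qform_gram qform_wgram using x' by simp
  qed
  then show ?thesis using s by blast
qed

end

section \<open>Sparsifiers for sums of squared differences\<close>

lemma double_cover_sparsifier:
  fixes V :: "'v set" and C :: "('v \<times> 'v) set" and w :: "'v \<times> 'v \<Rightarrow> real"
  assumes V: "finite V" and C: "C \<subseteq> V \<times> V" and w: "\<forall>c\<in>C. w c \<ge> 0"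
    and \<epsilon>: "0 < \<epsilon>" "\<epsilon> < 1"
  shows "\<exists>s. (\<forall>c. s c \<ge> 0) \<and> card {c\<in>C. s c \<noteq> 0} \<le> nat \<lceil>12 / \<epsilon>\<^sup>2\<rceil> * (2 * card V) \<and>
    (\<forall>f g :: 'v \<Rightarrow> real.
       (1 - \<epsilon>) * (\<Sum>c\<in>C. w c * (f (fst c) - g (snd c))\<^sup>2) \<le> (\<Sum>c\<in>C. s c * w c * (f (fst c) - g (snd c))\<^sup>2) \<and>
       (\<Sum>c\<in>C. s c * w c * (f (fst c) - g (snd c))\<^sup>2) \<le> (1 + \<epsilon>) * (\<Sum>c\<in>C. w c * (f (fst c) - g (snd c))\<^sup>2))"
proof -
  define S where "S = V \<times> (UNIV :: bool set)"
  have S: "finite S" "card S = 2 * card V" unfolding S_def using V by (simp_all add: card_cartesian_product)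
  obtain idx where idx: "bij_betw idx S {0..<card S}" using ex_bij_betw_finite_nat[OF S(1)] by blast
  have idx_less: "idx p < 2 * card V" if "p \<in> S" for p
    using idx that S(2) unfolding bij_betw_def by auto
  have finite_C: "finite C" using finite_subset[OF C] V by blast
  \<comment> \<open>the constraint \<open>(u, v)\<close> is the edge from the left copy of \<open>u\<close> to the right copy of \<open>v\<close>\<close>
  define e where "e c = (\<lambda>i. sqrt (w c) * (std_basis (idx (fst c, True)) i - std_basis (idx (snd c, False)) i))" for c
  interpret gram_setting "2 * card V" C e by unfold_locales (rule finite_C)
  obtain s where s: "\<forall>c. s c \<ge> 0" "card {c\<in>C. s c \<noteq> 0} \<le> nat \<lceil>12 / \<epsilon>\<^sup>2\<rceil> * (2 * card V)"
    and bounds: "\<And>x. (1 - \<epsilon>) * (\<Sum>c\<in>C. (vdot (2 * card V) (e c) x)\<^sup>2) \<le> (\<Sum>c\<in>C. s c * (vdot (2 * card V) (e c) x)\<^sup>2) \<and>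
       (\<Sum>c\<in>C. s c * (vdot (2 * card V) (e c) x)\<^sup>2) \<le> (1 + \<epsilon>) * (\<Sum>c\<in>C. (vdot (2 * card V) (e c) x)\<^sup>2)"
    using spectral_sparsifier[OF \<epsilon>] by blast
  have "(1 - \<epsilon>) * (\<Sum>c\<in>C. w c * (f (fst c) - g (snd c))\<^sup>2) \<le> (\<Sum>c\<in>C. s c * w c * (f (fst c) - g (snd c))\<^sup>2) \<and>
       (\<Sum>c\<in>C. s c * w c * (f (fst c) - g (snd c))\<^sup>2) \<le> (1 + \<epsilon>) * (\<Sum>c\<in>C. w c * (f (fst c) - g (snd c))\<^sup>2)"
    for f g :: "'v \<Rightarrow> real"
  proof -
    define x where "x i = (case inv_into S idx i of (v, True) \<Rightarrow> f v | (v, False) \<Rightarrow> g v)" for i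
    have "(vdot (2 * card V) (e c) x)\<^sup>2 = w c * (f (fst c) - g (snd c))\<^sup>2" if c: "c \<in> C" for c
    proof -
      have in_S: "(fst c, True) \<in> S" "(snd c, False) \<in> S" unfolding S_def using c C by auto
      have "vdot (2 * card V) (e c) x = sqrt (w c) * (f (fst c) - g (snd c))"
        unfolding e_def vdot_scale_left vdot_diff_left
        using idx_less[OF in_S(1)] idx_less[OF in_S(2)] inv_into_f_f[OF bij_betw_imp_inj_on[OF idx]] in_S
        by (simp add: vdot_std_basis x_def)
      then show ?thesis using w c by (simp add: power_mult_distrib)
    qed
    then show ?thesis using bounds[of x] by (simp add: mult.assoc)
  qed
  then show ?thesis using s by blast
qed

lemma csp_val_as_difference_squares:
  assumes decomp: "\<forall>a\<in>D. \<forall>b\<in>D. of_bool (P a b) = (\<Sum>k\<in>K. \<mu> k * (f k a - g k b)\<^sup>2)"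
    and C: "C \<subseteq> V \<times> V" and A: "\<forall>x\<in>V. A x \<in> D"
  shows "csp_val P C \<omega> A = (\<Sum>k\<in>K. \<mu> k * (\<Sum>c\<in>C. \<omega> c * (f k (A (fst c)) - g k (A (snd c)))\<^sup>2))"
proof -
  have "csp_val P C \<omega> A = (\<Sum>c\<in>C. \<omega> c * (\<Sum>k\<in>K. \<mu> k * (f k (A (fst c)) - g k (A (snd c)))\<^sup>2))"
    unfolding csp_val_def
  proof (intro sum.cong refl)
    fix c assume "c \<in> C"
    then have "A (fst c) \<in> D" "A (snd c) \<in> D" using C A by auto
    then show "\<omega> c * (if P (A (fst c)) (A (snd c)) then 1 else 0)
        = \<omega> c * (\<Sum>k\<in>K. \<mu> k * (f k (A (fst c)) - g k (A (snd c)))\<^sup>2)"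
      using decomp by (simp add: of_bool_def)
  qed
  also have "\<dots> = (\<Sum>c\<in>C. \<Sum>k\<in>K. \<mu> k * (\<omega> c * (f k (A (fst c)) - g k (A (snd c)))\<^sup>2))"
    by (simp add: sum_distrib_left mult.left_commute)
  also have "\<dots> = (\<Sum>k\<in>K. \<Sum>c\<in>C. \<mu> k * (\<omega> c * (f k (A (fst c)) - g k (A (snd c)))\<^sup>2))"
    by (rule sum.swap)
  finally show ?thesis by (simp add: sum_distrib_left)
qed

lemma sparsifier_from_difference_squares:
  fixes f g :: "'k \<Rightarrow> 'd \<Rightarrow> real"
  assumes K: "finite K" and \<mu>: "\<forall>k\<in>K. \<mu> k \<ge> 0"
    and decomp: "\<forall>a\<in>D. \<forall>b\<in>D. of_bool (P a b) = (\<Sum>k\<in>K. \<mu> k * (f k a - g k b)\<^sup>2)"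
    and inst: "csp_instance V C w" and \<epsilon>: "0 < \<epsilon>" "\<epsilon> < 1"
  shows "\<exists>Pie we. is_sparsifier P D V C w \<epsilon> Pie we \<and> card Pie \<le> nat \<lceil>12 / \<epsilon>\<^sup>2\<rceil> * (2 * card V)"
proof -
  have V: "finite V" and C: "C \<subseteq> V \<times> V" and w: "\<forall>c\<in>C. w c > 0"
    using inst unfolding csp_instance_def by auto
  obtain s where s: "\<forall>c. s c \<ge> 0" "card {c\<in>C. s c \<noteq> 0} \<le> nat \<lceil>12 / \<epsilon>\<^sup>2\<rceil> * (2 * card V)"
    and bounds: "\<And>f g :: _ \<Rightarrow> real.
       (1 - \<epsilon>) * (\<Sum>c\<in>C. w c * (f (fst c) - g (snd c))\<^sup>2) \<le> (\<Sum>c\<in>C. s c * w c * (f (fst c) - g (snd c))\<^sup>2) \<and>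
       (\<Sum>c\<in>C. s c * w c * (f (fst c) - g (snd c))\<^sup>2) \<le> (1 + \<epsilon>) * (\<Sum>c\<in>C. w c * (f (fst c) - g (snd c))\<^sup>2)"
    using double_cover_sparsifier[OF V C _ \<epsilon>] w less_imp_le by blast
  define Pie where "Pie = {c\<in>C. s c \<noteq> 0}"
  have "is_sparsifier P D V C w \<epsilon> Pie (\<lambda>c. s c * w c)"
    unfolding is_sparsifier_def
  proof (intro conjI allI impI)
    show "Pie \<subseteq> C" unfolding Pie_def by auto
    show "\<forall>c\<in>Pie. s c * w c > 0" using s(1) w unfolding Pie_def by (simp add: less_le)
    fix A :: "_ \<Rightarrow> _" assume A: "\<forall>x\<in>V. A x \<in> D"
    have Pie_val: "csp_val P Pie (\<lambda>c. s c * w c) A = csp_val P C (\<lambda>c. s c * w c) A"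
      unfolding csp_val_def Pie_def using finite_subset[OF C] V by (intro sum.mono_neutral_left) auto
    let ?Q = "\<lambda>\<omega> k. \<Sum>c\<in>C. \<omega> c * (f k (A (fst c)) - g k (A (snd c)))\<^sup>2"
    have Q: "(1 - \<epsilon>) * (\<mu> k * ?Q w k) \<le> \<mu> k * ?Q (\<lambda>c. s c * w c) k \<and>
        \<mu> k * ?Q (\<lambda>c. s c * w c) k \<le> (1 + \<epsilon>) * (\<mu> k * ?Q w k)" if "k \<in> K" for k
      using bounds[of "\<lambda>v. f k (A v)" "\<lambda>v. g k (A v)"] \<mu> that
      by (auto simp: mult.left_commute intro!: mult_left_mono)
    note vals = Pie_val csp_val_as_difference_squares[OF decomp C A]
    show "(1 - \<epsilon>) * csp_val P C w A \<le> csp_val P Pie (\<lambda>c. s c * w c) A"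
      unfolding vals sum_distrib_left[of "1 - \<epsilon>"] using Q by (intro sum_mono) blast
    show "csp_val P Pie (\<lambda>c. s c * w c) A \<le> (1 + \<epsilon>) * csp_val P C w A"
      unfolding vals sum_distrib_left[of "1 + \<epsilon>"] using Q by (intro sum_mono) blast
  qed
  then show ?thesis using s(2) unfolding Pie_def by blast
qed

section \<open>Predicates without singleton \<open>2 \<times> 2\<close> restrictions\<close>

definition zero_set :: "('d \<Rightarrow> 'd \<Rightarrow> bool) \<Rightarrow> 'd set \<Rightarrow> 'd \<Rightarrow> 'd set" where
  "zero_set P D a = {b\<in>D. \<not> P a b}"

definition zero_sets :: "('d \<Rightarrow> 'd \<Rightarrow> bool) \<Rightarrow> 'd set \<Rightarrow> 'd set set" where
  "zero_sets P D = {zero_set P D a | a. a \<in> D \<and> zero_set P D a \<noteq> {}}"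

lemma finite_zero_sets:
  assumes "finite D" shows "finite (zero_sets P D)"
proof -
  have "zero_sets P D \<subseteq> Pow D" unfolding zero_sets_def zero_set_def by blast
  then show ?thesis using finite_subset assms by blast
qed

lemma zero_sets_disjoint:
  assumes no_singleton: "\<And>B C. B \<subseteq> D \<Longrightarrow> C \<subseteq> D \<Longrightarrow> card B = 2 \<Longrightarrow> card C = 2 \<Longrightarrow>
      \<not> restriction_singleton P B C"
    and X: "X \<in> zero_sets P D" and Y: "Y \<in> zero_sets P D" and b: "b \<in> X" "b \<in> Y"
  shows "X = Y"
proof -
  \<comment> \<open>a point \<open>c\<close> of \<open>X - Y\<close> would make \<open>P\<close> on \<open>{a\<^sub>1, a\<^sub>2} \<times> {b, c}\<close> a singleton\<close>
  have "X \<subseteq> Y" if X: "X \<in> zero_sets P D" and Y: "Y \<in> zero_sets P D" and b: "b \<in> X" "b \<in> Y" for X Y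
  proof
    fix c assume "c \<in> X"
    obtain a1 a2 where a: "a1 \<in> D" "X = zero_set P D a1" "a2 \<in> D" "Y = zero_set P D a2"
      using X Y unfolding zero_sets_def by auto
    show "c \<in> Y"
    proof (rule ccontr)
      assume "c \<notin> Y"
      have D: "b \<in> D" "c \<in> D" and P: "\<not> P a1 b" "\<not> P a1 c" "\<not> P a2 b" "P a2 c"
        using b \<open>c \<in> X\<close> \<open>c \<notin> Y\<close> unfolding a(2,4) zero_set_def by simp_all
      then have ne: "a1 \<noteq> a2" "b \<noteq> c" by auto
      from P have "{(x, y) \<in> {a1, a2} \<times> {b, c}. P x y} = {(a2, c)}" by auto
      then have "restriction_singleton P {a1, a2} {b, c}" unfolding restriction_singleton_def by simp
      moreover have "card {a1, a2} = 2" "card {b, c} = 2" using ne by simp_all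
      ultimately show False using no_singleton[of "{a1, a2}" "{b, c}"] a(1,3) D by blast
    qed
  qed
  then show ?thesis using assms by blast
qed

lemma sum_of_bool_mem_zero_sets:
  assumes "finite D"
    and "\<And>B C. B \<subseteq> D \<Longrightarrow> C \<subseteq> D \<Longrightarrow> card B = 2 \<Longrightarrow> card C = 2 \<Longrightarrow> \<not> restriction_singleton P B C"
    and F: "F \<subseteq> zero_sets P D"
  shows "(\<Sum>X\<in>F. of_bool (b \<in> X)) = (of_bool (b \<in> \<Union>F) :: real)"
proof (cases "b \<in> \<Union>F")
  case True
  then obtain X0 where X0: "X0 \<in> F" "b \<in> X0" by blast
  have "finite F" using F finite_zero_sets[OF assms(1)] finite_subset by blast
  moreover have "of_bool (b \<in> X) = (if X = X0 then 1 else 0 :: real)" if "X \<in> F" for X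
  proof (cases "X = X0")
    case False
    then have "b \<notin> X" using zero_sets_disjoint[OF assms(2), where X=X and Y=X0 and b=b] F X0 that by blast
    then show ?thesis using False by simp
  qed (use X0 in simp)
  ultimately show ?thesis using X0 True by simp
qed auto

fun left_feature :: "('d \<Rightarrow> 'd \<Rightarrow> bool) \<Rightarrow> 'd set \<Rightarrow> 'd set + bool \<Rightarrow> 'd \<Rightarrow> real" where
  "left_feature P D (Inl X) a = of_bool (zero_set P D a = X)"
| "left_feature P D (Inr True) a = of_bool (zero_set P D a = {})"
| "left_feature P D (Inr False) a = 0"

fun right_feature :: "('d \<Rightarrow> 'd \<Rightarrow> bool) \<Rightarrow> 'd set \<Rightarrow> 'd set + bool \<Rightarrow> 'd \<Rightarrow> real" where
  "right_feature P D (Inl X) b = of_bool (b \<in> X)"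
| "right_feature P D (Inr True) b = 0"
| "right_feature P D (Inr False) b = of_bool (b \<notin> \<Union>(zero_sets P D))"

definition features :: "('d \<Rightarrow> 'd \<Rightarrow> bool) \<Rightarrow> 'd set \<Rightarrow> ('d set + bool) set" where
  "features P D = insert (Inr True) (insert (Inr False) (Inl ` zero_sets P D))"

lemma of_bool_diff_square: "(of_bool p - of_bool q)\<^sup>2 = (of_bool (p \<noteq> q) :: real)"
  by simp

lemma sum_features:
  assumes "finite D"
  shows "(\<Sum>k\<in>features P D. (left_feature P D k a - right_feature P D k b)\<^sup>2)
    = of_bool (zero_set P D a = {}) + of_bool (b \<notin> \<Union>(zero_sets P D))
      + (\<Sum>X\<in>zero_sets P D. of_bool ((zero_set P D a = X) \<noteq> (b \<in> X)))"
proof -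
  have "(\<Sum>k\<in>features P D. (left_feature P D k a - right_feature P D k b)\<^sup>2)
      = (left_feature P D (Inr True) a - right_feature P D (Inr True) b)\<^sup>2
        + (left_feature P D (Inr False) a - right_feature P D (Inr False) b)\<^sup>2
        + (\<Sum>X\<in>zero_sets P D. (left_feature P D (Inl X) a - right_feature P D (Inl X) b)\<^sup>2)"
    unfolding features_def using finite_zero_sets[OF assms]
    by (simp add: sum.reindex add.assoc image_iff del: left_feature.simps right_feature.simps)
  then show ?thesis by (simp only: left_feature.simps right_feature.simps of_bool_diff_square) simp
qed

lemma predicate_as_difference_squares:
  assumes D: "finite D"
    and no_singleton: "\<And>B C. B \<subseteq> D \<Longrightarrow> C \<subseteq> D \<Longrightarrow> card B = 2 \<Longrightarrow> card C = 2 \<Longrightarrow>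
      \<not> restriction_singleton P B C"
    and a: "a \<in> D" and b: "b \<in> D"
  shows "2 * of_bool (P a b) = (\<Sum>k\<in>features P D. (left_feature P D k a - right_feature P D k b)\<^sup>2)"
proof -
  let ?F = "zero_sets P D" and ?Z = "zero_set P D a"
  have "of_bool (?Z = {}) + of_bool (b \<notin> \<Union>?F) + (\<Sum>X\<in>?F. of_bool ((?Z = X) \<noteq> (b \<in> X)))
      = (2 * of_bool (P a b) :: real)"
  proof (cases "?Z = {}")
    case True
    then have "P a b" using b unfolding zero_set_def by auto
    have "(\<Sum>X\<in>?F. of_bool ((?Z = X) \<noteq> (b \<in> X))) = (\<Sum>X\<in>?F. of_bool (b \<in> X) :: real)"
      using True by (intro sum.cong) (auto simp: zero_sets_def)
    also have "\<dots> = of_bool (b \<in> \<Union>?F)" by (rule sum_of_bool_mem_zero_sets[OF D no_singleton order_refl])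
    finally show ?thesis using True \<open>P a b\<close> by (cases "b \<in> \<Union>?F") simp_all
  next
    case False
    then have Z: "?Z \<in> ?F" unfolding zero_sets_def using a by auto
    have "(\<Sum>X\<in>?F. of_bool ((?Z = X) \<noteq> (b \<in> X)))
        = of_bool ((?Z = ?Z) \<noteq> (b \<in> ?Z)) + (\<Sum>X\<in>?F - {?Z}. of_bool ((?Z = X) \<noteq> (b \<in> X)) :: real)"
      by (rule sum.remove[OF finite_zero_sets[OF D] Z])
    also have "\<dots> = of_bool (b \<notin> ?Z) + (\<Sum>X\<in>?F - {?Z}. of_bool (b \<in> X))"
      by (intro arg_cong2[where f="(+)"] sum.cong) auto
    also have "(\<Sum>X\<in>?F - {?Z}. of_bool (b \<in> X)) = (of_bool (b \<in> \<Union>(?F - {?Z})) :: real)"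
      by (rule sum_of_bool_mem_zero_sets[OF D no_singleton Diff_subset])
    finally have sum: "(\<Sum>X\<in>?F. of_bool ((?Z = X) \<noteq> (b \<in> X)))
        = (of_bool (b \<notin> ?Z) + of_bool (b \<in> \<Union>(?F - {?Z})) :: real)" .
    show ?thesis
    proof (cases "b \<in> ?Z")
      case True
      then have "\<not> P a b" unfolding zero_set_def by auto
      moreover have "b \<notin> X" if "X \<in> ?F - {?Z}" for X
        using zero_sets_disjoint[OF no_singleton Z _ True, of X] that by blast
      moreover have "b \<in> \<Union>?F" using True Z by blast
      ultimately show ?thesis unfolding sum using False True by simp
    next
      case b_notin: False
      then have "P a b" using b unfolding zero_set_def by auto
      moreover have "(b \<in> \<Union>(?F - {?Z})) = (b \<in> \<Union>?F)" using b_notin by blast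
      ultimately show ?thesis unfolding sum using False b_notin by (cases "b \<in> \<Union>?F") simp_all
    qed
  qed
  then show ?thesis unfolding sum_features[OF D] by simp
qed

lemma finite_features: "finite D \<Longrightarrow> finite (features P D)"
  unfolding features_def by (simp add: finite_zero_sets)

lemma real_nat_ceiling_12_div_le:
  assumes "0 < \<epsilon>" "\<epsilon> < 1" shows "real (nat \<lceil>12 / \<epsilon>\<^sup>2\<rceil>) \<le> 13 / \<epsilon>\<^sup>2"
proof -
  have "real (nat \<lceil>12 / \<epsilon>\<^sup>2\<rceil>) \<le> 12 / \<epsilon>\<^sup>2 + 1" using assms by simp
  moreover have "\<epsilon>\<^sup>2 \<le> 1" using assms by (simp add: power_le_one)
  then have "12 / \<epsilon>\<^sup>2 + 1 \<le> 13 / \<epsilon>\<^sup>2" using assms by (simp add: field_simps)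
  ultimately show ?thesis by linarith
qed

lemma no_singleton_sparsifier:
  assumes D: "finite D"
    and no_singleton: "\<And>B C. B \<subseteq> D \<Longrightarrow> C \<subseteq> D \<Longrightarrow> card B = 2 \<Longrightarrow> card C = 2 \<Longrightarrow>
      \<not> restriction_singleton P B C"
    and inst: "csp_instance V C w" and \<epsilon>: "0 < \<epsilon>" "\<epsilon> < 1"
  shows "\<exists>Pie we. is_sparsifier P D V C w \<epsilon> Pie we \<and> card Pie \<le> nat \<lceil>12 / \<epsilon>\<^sup>2\<rceil> * (2 * card V)"
proof -
  have "\<forall>a\<in>D. \<forall>b\<in>D. of_bool (P a b)
      = (\<Sum>k\<in>features P D. 1 / 2 * (left_feature P D k a - right_feature P D k b)\<^sup>2)"
  proof (intro ballI)
    fix a b assume "a \<in> D" "b \<in> D"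
    from predicate_as_difference_squares[OF D no_singleton this]
    show "of_bool (P a b) = (\<Sum>k\<in>features P D. 1 / 2 * (left_feature P D k a - right_feature P D k b)\<^sup>2)"
      unfolding sum_distrib_left[symmetric] by linarith
  qed
  from sparsifier_from_difference_squares[OF finite_features[OF D] _ this inst \<epsilon>] show ?thesis by simp
qed

theorem theorem8:
  fixes D :: "'d set" and P :: "'d \<Rightarrow> 'd \<Rightarrow> bool"
  assumes "finite D"
    and "\<And>B C. B \<subseteq> D \<Longrightarrow> C \<subseteq> D \<Longrightarrow> card B = 2 \<Longrightarrow> card C = 2 \<Longrightarrow>
            \<not> restriction_singleton P B C"
  shows "\<exists>K::real. \<forall>\<epsilon>::real. \<forall>(V :: 'v set) Pi w.
           0 < \<epsilon> \<and> \<epsilon> < 1 \<and> csp_instance V Pi w \<longrightarrow>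
           (\<exists>Pie we. is_sparsifier P D V Pi w \<epsilon> Pie we \<and>
                     real (card Pie) \<le> K * real (card V) / \<epsilon>^2)"
proof (intro exI[of _ 26] allI impI)
  fix \<epsilon> :: real and V :: "'v set" and C w
  assume "0 < \<epsilon> \<and> \<epsilon> < 1 \<and> csp_instance V C w"
  then have \<epsilon>: "0 < \<epsilon>" "\<epsilon> < 1" and inst: "csp_instance V C w" by auto
  obtain Pie we where sparsifier: "is_sparsifier P D V C w \<epsilon> Pie we"
    and card: "card Pie \<le> nat \<lceil>12 / \<epsilon>\<^sup>2\<rceil> * (2 * card V)"
    using no_singleton_sparsifier[OF assms inst \<epsilon>] by blast
  have "real (card Pie) \<le> real (nat \<lceil>12 / \<epsilon>\<^sup>2\<rceil> * (2 * card V))"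
    using card by (simp only: of_nat_le_iff)
  also have "\<dots> = real (nat \<lceil>12 / \<epsilon>\<^sup>2\<rceil>) * (2 * real (card V))" by simp
  also have "\<dots> \<le> 13 / \<epsilon>\<^sup>2 * (2 * real (card V))"
    using real_nat_ceiling_12_div_le[OF \<epsilon>] by (intro mult_right_mono) auto
  finally show "\<exists>Pie we. is_sparsifier P D V C w \<epsilon> Pie we \<and> real (card Pie) \<le> 26 * real (card V) / \<epsilon>^2"
    using sparsifier by auto
qed

end
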